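(* Let $(V,\mathcal{E})$ be a forward neutral or backward neutral genealogy model (e.g. the lookdown representation) based on $\tau,(X_n),(k_n)$ with $\tau=\infty$. If $t^o_\infty=\infty$, then fixation occurs almost surely.
   Context: Data: $\tau=\infty$, positive integers $(X_n)_{n\ge0}$, vectors $k_n=(k_n(i))_{i=1}^{X_n}$ of nonnegative integers with $\sum_ik_n(i)=X_{n+1}$. $V_n=\{(n,i):1\le i\le X_n\}$, $V=\bigcup_nV_n$. A genealogy model is a random edge set $\mathcal{E}\subset\bigcup_nV_n\times V_{n+1}$ such that each vertex of $V_{n+1}$ has exactly one parent in $V_n$ and for each $n$ the out-degrees $(\mathrm{od}(v))_{v\in V_n}$ are a permutation of $k_n$. Let $\mathcal{E}_n=\mathcal{E}\cap(V_n\times V_{n+1})$, $K_n=(\mathrm{od}((n,i)))_{i}$, and $\Xi_n$ the partition of $V_{n+1}$ into sibling sets. Forward neutral: for all $n$, $K_n$ is exchangeable and independent of $(\mathcal{E}_m)_{m<n}$. Backward neutral: for all $n$, $\Xi_n$ is exchangeable (equal in law to $\{\pi(A):A\in\Xi_n\}$ for each fixed permutation $\pi$ of $V_{n+1}$) and independent of $(\mathcal{E}_m)_{m>n}$. The lookdown representation: fix a partition $\xi_n$ of $\{1,\dots,X_{n+1}\}$ with block sizes the nonzero entries of $k_n$, take independent uniform permutations $\sigma_n$ of $\{1,\dots,X_{n+1}\}$, list the blocks of $\{\sigma_n(A):A\in\xi_n\}$ by increasing least element as $B_1,\dots,B_{\ell_n}$, and connect $(n,i)$ to $(n+1,j)$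 for $j\in B_i$. $D_m(v)$ denotes the descendants of $v\in V_n$ in $V_m$. Fixation: for each $n$ there is $m>n$ with $D_m(v)=\emptyset$ for all but one $v\in V_n$. Truncated coalescent time scale: $L_n=\#\{i:k_n(i)\ge2\}$, $s_n^o=\frac{2L_n}{X_{n+1}(X_{n+1}-1)}$, $t_n^o=\sum_{m<n}s_m^o$, $t_\infty^o=\lim_nt_n^o$. *)

theory Defs
  imports "HOL-Probability.Probability"
begin

type_synonym vertex = "nat \<times> nat"
type_synonym edge = "vertex \<times> vertex"

definition gen :: "(nat \<Rightarrow> nat) \<Rightarrow> nat \<Rightarrow> vertex set" where
  "gen X n = {n} \<times> {1..X n}"

definition slots :: "(nat \<Rightarrow> nat) \<Rightarrow> nat \<Rightarrow> edge set" where
  "slots X n = gen X n \<times> gen X (Suc n)"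

definition outdeg :: "edge set \<Rightarrow> vertex \<Rightarrow> nat" where
  "outdeg E v = card {w. (v, w) \<in> E}"

definition desc :: "(nat \<Rightarrow> nat) \<Rightarrow> edge set \<Rightarrow> nat \<Rightarrow> vertex \<Rightarrow> vertex set" where
  "desc X E m v = {w \<in> gen X m. (v, w) \<in> E\<^sup>*}"

definition genealogy_edges :: "(nat \<Rightarrow> nat) \<Rightarrow> (nat \<Rightarrow> nat \<Rightarrow> nat) \<Rightarrow> edge set \<Rightarrow> bool" where
  "genealogy_edges X k E \<longleftrightarrow>
     E \<subseteq> (\<Union>n. slots X n) \<and>
     (\<forall>n. \<forall>w \<in> gen X (Suc n). \<exists>!v. v \<in> gen X n \<and> (v, w) \<in> E) \<and>
     (\<forall>n. \<exists>p. p permutes {1..X n} \<and> (\<forall>i \<in> {1..X n}. outdeg E (n, i) = k n (p i)))"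

definition Kvec :: "(nat \<Rightarrow> nat) \<Rightarrow> edge set \<Rightarrow> nat \<Rightarrow> nat \<Rightarrow> nat" where
  "Kvec X E n = (\<lambda>i. if i \<in> {1..X n} then outdeg E (n, i) else 0)"

definition sibpart :: "(nat \<Rightarrow> nat) \<Rightarrow> edge set \<Rightarrow> nat \<Rightarrow> vertex set set" where
  "sibpart X E n = (desc X E (Suc n)) ` gen X n - {{}}"

text \<open>(E_m)_{m<n} and (E_m)_{m>n}, encoded as indicator functions on edges.\<close>
definition edges_before :: "(nat \<Rightarrow> nat) \<Rightarrow> edge set \<Rightarrow> nat \<Rightarrow> edge \<Rightarrow> bool" where
  "edges_before X E n = (\<lambda>e. e \<in> E \<and> e \<in> (\<Union>m<n. slots X m))"

definition edges_after :: "(nat \<Rightarrow> nat) \<Rightarrow> edge set \<Rightarrow> nat \<Rightarrow> edge \<Rightarrow> bool" where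
  "edges_after X E n = (\<lambda>e. e \<in> E \<and> e \<in> (\<Union>m\<in>{Suc n..}. slots X m))"

definition edge_space :: "(edge \<Rightarrow> bool) measure" where
  "edge_space = PiM UNIV (\<lambda>_. count_space UNIV)"

definition indep_rv :: "'w measure \<Rightarrow> 'a measure \<Rightarrow> ('w \<Rightarrow> 'a) \<Rightarrow> 'b measure \<Rightarrow> ('w \<Rightarrow> 'b) \<Rightarrow> bool" where
  "indep_rv M Ma A Mb B \<longleftrightarrow>
     prob_space.indep_set M {A -` S \<inter> space M | S. S \<in> sets Ma} {B -` S \<inter> space M | S. S \<in> sets Mb}"

definition forward_neutral :: "'w measure \<Rightarrow> (nat \<Rightarrow> nat) \<Rightarrow> ('w \<Rightarrow> edge set) \<Rightarrow> bool" where
  "forward_neutral M X \<E> \<longleftrightarrow> (\<forall>n.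
     (\<forall>\<pi>. \<pi> permutes {1..X n} \<longrightarrow>
        distr M (count_space UNIV) (\<lambda>\<omega>. Kvec X (\<E> \<omega>) n \<circ> \<pi>)
        = distr M (count_space UNIV) (\<lambda>\<omega>. Kvec X (\<E> \<omega>) n)) \<and>
     indep_rv M (count_space UNIV) (\<lambda>\<omega>. Kvec X (\<E> \<omega>) n)
        edge_space (\<lambda>\<omega>. edges_before X (\<E> \<omega>) n))"

definition backward_neutral :: "'w measure \<Rightarrow> (nat \<Rightarrow> nat) \<Rightarrow> ('w \<Rightarrow> edge set) \<Rightarrow> bool" where
  "backward_neutral M X \<E> \<longleftrightarrow> (\<forall>n.
     (\<forall>\<pi>. \<pi> permutes gen X (Suc n) \<longrightarrow>
        distr M (count_space UNIV) (\<lambda>\<omega>. (\<lambda>A. \<pi> ` A) ` sibpart X (\<E> \<omega>) n)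
        = distr M (count_space UNIV) (\<lambda>\<omega>. sibpart X (\<E> \<omega>) n)) \<and>
     indep_rv M (count_space UNIV) (\<lambda>\<omega>. sibpart X (\<E> \<omega>) n)
        edge_space (\<lambda>\<omega>. edges_after X (\<E> \<omega>) n))"

definition fixation :: "(nat \<Rightarrow> nat) \<Rightarrow> edge set \<Rightarrow> bool" where
  "fixation X E \<longleftrightarrow> (\<forall>n. \<exists>m>n. \<exists>u \<in> gen X n. \<forall>v \<in> gen X n. v \<noteq> u \<longrightarrow> desc X E m v = {})"

definition Lcnt :: "(nat \<Rightarrow> nat) \<Rightarrow> (nat \<Rightarrow> nat \<Rightarrow> nat) \<Rightarrow> nat \<Rightarrow> nat" where
  "Lcnt X k n = card {i \<in> {1..X n}. 2 \<le> k n i}"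

definition s_o :: "(nat \<Rightarrow> nat) \<Rightarrow> (nat \<Rightarrow> nat \<Rightarrow> nat) \<Rightarrow> nat \<Rightarrow> real" where
  "s_o X k n = 2 * real (Lcnt X k n) / (real (X (Suc n)) * (real (X (Suc n)) - 1))"

definition t_o :: "(nat \<Rightarrow> nat) \<Rightarrow> (nat \<Rightarrow> nat \<Rightarrow> nat) \<Rightarrow> nat \<Rightarrow> real" where
  "t_o X k n = (\<Sum>m<n. s_o X k m)"

end

theory Submission
  imports Defs
begin

text \<open>Fix generations n \<le> m and let A j be the number of ancestors in generation j of the whole
  generation m. Passing from generation j + 1 to j, a b-set of vertices loses one parent for every
  vertex of generation j two of whose children it contains; averaging over all b-sets, the
  potential 1 - 1/A therefore drops by at least s_o j / 4 in expectation while A \<ge> 2. Forward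
  neutrality (an exchangeable offspring vector independent of the past) or backward neutrality
  (an exchangeable sibling partition independent of the future) makes A m, ..., A n behave like
  a time-inhomogeneous Markov chain with exactly these averaged transition kernels. Summing the
  drift gives P(A n \<ge> 2) \<le> 4 / (t_o m - t_o n), which tends to 0, so almost surely every
  generation has a single ancestor of all sufficiently late generations: fixation.\<close>

lemma finite_gen[simp]: "finite (gen X n)"
  by (simp add: gen_def)

lemma card_gen[simp]: "card (gen X n) = X n"
  by (simp add: gen_def card_cartesian_product)

lemma mem_gen: "v \<in> gen X n \<longleftrightarrow> fst v = n \<and> 1 \<le> snd v \<and> snd v \<le> X n"
  by (cases v) (auto simp: gen_def)

lemma finite_slots[simp]: "finite (slots X n)"
  by (simp add: slots_def)

definition gen_subsets :: "(nat \<Rightarrow> nat) \<Rightarrow> nat \<Rightarrow> nat \<Rightarrow> vertex set set" where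
  "gen_subsets X j b = {R. R \<subseteq> gen X j \<and> card R = b}"

lemma finite_gen_subsets[simp]: "finite (gen_subsets X j b)"
proof -
  have "gen_subsets X j b \<subseteq> Pow (gen X j)" unfolding gen_subsets_def by blast
  then show ?thesis by (rule finite_subset) simp
qed

lemma card_gen_subsets: "card (gen_subsets X j b) = X j choose b"
  unfolding gen_subsets_def using n_subsets[of "gen X j" b] by simp

lemma gen_subsets_0: "gen_subsets X j 0 = {{}}"
  unfolding gen_subsets_def by (auto simp: card_eq_0_iff finite_subset[OF _ finite_gen])

lemma gen_subsets_full: "gen_subsets X m (X m) = {gen X m}"
  unfolding gen_subsets_def using card_subset_eq[OF finite_gen] by auto

lemma sum_Pow_gen_by_card: "(\<Sum>T\<in>Pow (gen X j). F T) = (\<Sum>b\<in>{0..X j}. \<Sum>T\<in>gen_subsets X j b. F T)"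
proof -
  have "(\<Sum>b\<in>{0..X j}. \<Sum>T\<in>{T \<in> Pow (gen X j). card T = b}. F T) = (\<Sum>T\<in>Pow (gen X j). F T)"
  proof (rule sum.group)
    show "card ` Pow (gen X j) \<subseteq> {0..X j}" using card_mono[OF finite_gen] by fastforce
  qed simp_all
  moreover have "{T \<in> Pow (gen X j). card T = b} = gen_subsets X j b" for b
    unfolding gen_subsets_def by blast
  ultimately show ?thesis by simp
qed

lemma sum_by_fibres:
  fixes h :: "'b \<Rightarrow> 'c::semiring_1"
  assumes "finite S" "finite B" "f ` S \<subseteq> B"
  shows "(\<Sum>b\<in>B. of_nat (card {x \<in> S. f x = b}) * h b) = (\<Sum>x\<in>S. h (f x))"
proof -
  have "(\<Sum>b\<in>B. of_nat (card {x \<in> S. f x = b}) * h b) = (\<Sum>b\<in>B. \<Sum>x\<in>{x \<in> S. f x = b}. h (f x))"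
  proof (rule sum.cong[OF refl])
    fix b assume "b \<in> B"
    have "(\<Sum>x\<in>{x \<in> S. f x = b}. h (f x)) = (\<Sum>x\<in>{x \<in> S. f x = b}. h b)" by (rule sum.cong) auto
    then show "of_nat (card {x \<in> S. f x = b}) * h b = (\<Sum>x\<in>{x \<in> S. f x = b}. h (f x))" by simp
  qed
  also have "\<dots> = (\<Sum>x\<in>S. h (f x))" using assms by (rule sum.group)
  finally show ?thesis .
qed

lemma card_by_fibres:
  assumes "finite S" "finite B" "f ` S \<subseteq> B"
  shows "(\<Sum>b\<in>B. card {x \<in> S. f x = b}) = card S"
proof -
  have "(\<Sum>b\<in>B. card {x \<in> S. f x = b}) = (\<Sum>b\<in>B. \<Sum>x\<in>{x \<in> S. f x = b}. (1::nat))" by simp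
  also have "\<dots> = (\<Sum>x\<in>S. (1::nat))" using assms by (rule sum.group)
  finally show ?thesis by simp
qed

lemma sum_mult_const_factor:
  fixes f g :: "'a \<Rightarrow> 'b::comm_semiring_1"
  assumes "finite A" "\<And>x y. x \<in> A \<Longrightarrow> y \<in> A \<Longrightarrow> f x = f y"
  shows "(\<Sum>x\<in>A. f x * g x) * of_nat (card A) = (\<Sum>x\<in>A. f x) * (\<Sum>x\<in>A. g x)"
proof (cases "A = {}")
  case False
  then obtain x0 where x0: "x0 \<in> A" by blast
  have "(\<Sum>x\<in>A. f x * g x) = (\<Sum>x\<in>A. f x0 * g x)" by (rule sum.cong[OF refl]) (simp add: assms(2)[OF _ x0])
  also have "\<dots> = f x0 * (\<Sum>x\<in>A. g x)" by (rule sum_distrib_left[symmetric])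
  finally have e1: "(\<Sum>x\<in>A. f x * g x) = f x0 * (\<Sum>x\<in>A. g x)" .
  have "(\<Sum>x\<in>A. f x) = (\<Sum>x\<in>A. f x0)" by (rule sum.cong[OF refl]) (simp add: assms(2)[OF _ x0])
  then have e2: "(\<Sum>x\<in>A. f x) = of_nat (card A) * f x0" by simp
  show ?thesis unfolding e1 e2 by (simp only: mult_ac)
qed simp

lemma card_filter_permutes:
  assumes "p permutes A"
  shows "card {i \<in> A. P (p i)} = card {i \<in> A. P i}"
proof -
  have "p ` {i \<in> A. P (p i)} = {i \<in> A. P i}"
    using permutes_image[OF assms] by (auto simp: image_iff)
  moreover have "inj_on p {i \<in> A. P (p i)}"
    using permutes_inj[OF assms] by (rule inj_on_subset) simp
  ultimately show ?thesis using card_image by metis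
qed

lemma exists_permutes_image:
  assumes "finite A" "I \<subseteq> A" "I' \<subseteq> A" "card I = card I'"
  shows "\<exists>\<pi>. \<pi> permutes A \<and> \<pi> ` I = I'"
proof -
  have fI: "finite I" "finite I'" using assms finite_subset by blast+
  obtain f where f: "bij_betw f I I'" using finite_same_card_bij[OF fI assms(4)] by blast
  have "card (A - I) = card (A - I')" using assms fI by (simp add: card_Diff_subset)
  then obtain g where g: "bij_betw g (A - I) (A - I')"
    using finite_same_card_bij assms(1) by (metis finite_Diff)
  define \<pi> where "\<pi> x = (if x \<in> I then f x else if x \<in> A then g x else x)" for x
  have b1: "bij_betw \<pi> I I'" using f unfolding \<pi>_def by (rule bij_betw_cong[THEN iffD1, rotated]) simp
  have b2: "bij_betw \<pi> (A - I) (A - I')" using g unfolding \<pi>_def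
    by (rule bij_betw_cong[THEN iffD1, rotated]) simp
  have "bij_betw \<pi> (I \<union> (A - I)) (I' \<union> (A - I'))" using b1 b2 by (rule bij_betw_combine) blast
  moreover have "I \<union> (A - I) = A" "I' \<union> (A - I') = A" using assms by blast+
  ultimately have "bij_betw \<pi> A A" by simp
  moreover have "\<pi> x = x" if "x \<notin> A" for x using that assms unfolding \<pi>_def by auto
  ultimately have "\<pi> permutes A" by (rule bij_imp_permutes)
  moreover have "\<pi> ` I = I'" using b1 unfolding bij_betw_def by simp
  ultimately show ?thesis by blast
qed

lemma card_blocks_meeting_image:
  assumes "inj \<pi>"
  shows "card {B \<in> (\<lambda>A. \<pi> ` A) ` P. B \<inter> \<pi> ` S \<noteq> {}} = card {B \<in> P. B \<inter> S \<noteq> {}}"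
proof -
  have "\<pi> ` B \<inter> \<pi> ` S = \<pi> ` (B \<inter> S)" for B using assms by (simp add: image_Int)
  then have "{B \<in> (\<lambda>A. \<pi> ` A) ` P. B \<inter> \<pi> ` S \<noteq> {}} = (\<lambda>A. \<pi> ` A) ` {B \<in> P. B \<inter> S \<noteq> {}}"
    by auto
  moreover have "inj_on (\<lambda>A. \<pi> ` A) {B \<in> P. B \<inter> S \<noteq> {}}"
    using assms by (auto simp: inj_on_def inj_image_eq_iff)
  ultimately show ?thesis by (simp add: card_image)
qed

lemma card_subsets_bij_betw:
  assumes \<phi>: "bij_betw \<phi> A B" and PQ: "\<And>R. R \<subseteq> A \<Longrightarrow> P R \<longleftrightarrow> Q (\<phi> ` R)"
  shows "card {R. R \<subseteq> A \<and> card R = b \<and> P R} = card {R. R \<subseteq> B \<and> card R = b \<and> Q R}"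
proof (rule bij_betw_same_card[of "image \<phi>"], rule bij_betw_imageI)
  have inj: "inj_on \<phi> A" using \<phi> by (rule bij_betw_imp_inj_on)
  show "inj_on (image \<phi>) {R. R \<subseteq> A \<and> card R = b \<and> P R}"
    using inj_on_image_Pow[OF inj] by (rule inj_on_subset) auto
  have card_img: "card (\<phi> ` R) = card R" if "R \<subseteq> A" for R
    using card_image[OF inj_on_subset[OF inj that]] .
  have img: "\<phi> ` A = B" using \<phi> by (rule bij_betw_imp_surj_on)
  show "image \<phi> ` {R. R \<subseteq> A \<and> card R = b \<and> P R} = {R. R \<subseteq> B \<and> card R = b \<and> Q R}"
  proof
    show "image \<phi> ` {R. R \<subseteq> A \<and> card R = b \<and> P R} \<subseteq> {R. R \<subseteq> B \<and> card R = b \<and> Q R}"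
      using img card_img PQ by auto
    show "{R. R \<subseteq> B \<and> card R = b \<and> Q R} \<subseteq> image \<phi> ` {R. R \<subseteq> A \<and> card R = b \<and> P R}"
    proof
      fix S assume S: "S \<in> {R. R \<subseteq> B \<and> card R = b \<and> Q R}"
      then obtain R where "R \<subseteq> A" "S = \<phi> ` R" using img by (auto simp: subset_image_iff)
      with S card_img PQ show "S \<in> image \<phi> ` {R. R \<subseteq> A \<and> card R = b \<and> P R}" by auto
    qed
  qed
qed

lemma card_supersets:
  assumes "finite A" "P \<subseteq> A" "card P \<le> b"
  shows "card {R. R \<subseteq> A \<and> card R = b \<and> P \<subseteq> R} = (card A - card P) choose (b - card P)"
proof -
  have fP: "finite P" using assms finite_subset by blast
  have "bij_betw (\<lambda>R. R - P) {R. R \<subseteq> A \<and> card R = b \<and> P \<subseteq> R} {R'. R' \<subseteq> A - P \<and> card R' = b - card P}"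
  proof (rule bij_betw_byWitness[where f' = "\<lambda>R'. R' \<union> P"])
    show "\<forall>R\<in>{R. R \<subseteq> A \<and> card R = b \<and> P \<subseteq> R}. R - P \<union> P = R" by blast
    show "\<forall>R'\<in>{R'. R' \<subseteq> A - P \<and> card R' = b - card P}. R' \<union> P - P = R'" by blast
    show "(\<lambda>R. R - P) ` {R. R \<subseteq> A \<and> card R = b \<and> P \<subseteq> R} \<subseteq> {R'. R' \<subseteq> A - P \<and> card R' = b - card P}"
    proof
      fix R' assume "R' \<in> (\<lambda>R. R - P) ` {R. R \<subseteq> A \<and> card R = b \<and> P \<subseteq> R}"
      then obtain R where R: "R \<subseteq> A" "card R = b" "P \<subseteq> R" "R' = R - P" by blast
      have "finite R" using R(1) assms(1) finite_subset by blast
      then have "card (R - P) = b - card P" using R by (simp add: card_Diff_subset fP)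
      then show "R' \<in> {R'. R' \<subseteq> A - P \<and> card R' = b - card P}" using R by blast
    qed
    show "(\<lambda>R'. R' \<union> P) ` {R'. R' \<subseteq> A - P \<and> card R' = b - card P} \<subseteq> {R. R \<subseteq> A \<and> card R = b \<and> P \<subseteq> R}"
    proof
      fix R assume "R \<in> (\<lambda>R'. R' \<union> P) ` {R'. R' \<subseteq> A - P \<and> card R' = b - card P}"
      then obtain R' where R': "R' \<subseteq> A - P" "card R' = b - card P" "R = R' \<union> P" by blast
      have "finite R'" using R'(1) assms(1) finite_subset by blast
      then have "card (R' \<union> P) = b" using R' assms(3) fP by (subst card_Un_disjoint) auto
      then show "R \<in> {R. R \<subseteq> A \<and> card R = b \<and> P \<subseteq> R}" using R' assms(2) by blast
    qed
  qed
  then have "card {R. R \<subseteq> A \<and> card R = b \<and> P \<subseteq> R} = card {R'. R' \<subseteq> A - P \<and> card R' = b - card P}"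
    by (rule bij_betw_same_card)
  also have "\<dots> = card (A - P) choose (b - card P)" using assms(1) by (intro n_subsets) simp
  also have "card (A - P) = card A - card P" using assms by (simp add: card_Diff_subset fP)
  finally show ?thesis .
qed

lemma choose_mult_pred:
  assumes "2 \<le> b" "b \<le> x"
  shows "(x choose b) * b * (b - 1) = x * (x - 1) * ((x - 2) choose (b - 2))"
proof -
  define y where "y = x - 2"
  define c where "c = b - 2"
  have y: "x = Suc (Suc y)" "b = Suc (Suc c)" using assms unfolding y_def c_def by auto
  have e1: "Suc (Suc y) * (Suc y choose Suc c) = (Suc (Suc y) choose Suc (Suc c)) * Suc (Suc c)"
    by (rule Suc_times_binomial_eq)
  have e2: "Suc y * (y choose c) = (Suc y choose Suc c) * Suc c"
    by (rule Suc_times_binomial_eq)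
  have "(x choose b) * b * (b - 1) = (Suc (Suc y) choose Suc (Suc c)) * Suc (Suc c) * Suc c"
    using y by simp
  also have "\<dots> = Suc (Suc y) * ((Suc y choose Suc c) * Suc c)" using e1 by (metis mult.assoc)
  also have "\<dots> = Suc (Suc y) * (Suc y * (y choose c))" using e2 by simp
  also have "\<dots> = x * (x - 1) * ((x - 2) choose (b - 2))" using y by (simp add: algebra_simps)
  finally show ?thesis .
qed

text \<open>The number of b-sets of children whose parent set is I, when parent i has \<kappa> i children
  labelled 0, ..., \<kappa> i - 1: it depends on the edges only through the offspring vector.\<close>
definition cover_count :: "nat \<Rightarrow> (nat \<Rightarrow> nat) \<Rightarrow> nat set \<Rightarrow> nat" where
  "cover_count b \<kappa> I = card {R'. R' \<subseteq> Sigma I (\<lambda>i. {..<\<kappa> i}) \<and> card R' = b \<and> fst ` R' = I}"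

lemma cover_count_permute:
  assumes "bij \<pi>"
  shows "cover_count b (\<kappa> \<circ> \<pi>) I = cover_count b \<kappa> (\<pi> ` I)"
  unfolding cover_count_def
proof (rule card_subsets_bij_betw)
  have inj: "inj \<pi>" using assms by (rule bij_is_inj)
  show "bij_betw (\<lambda>(i, l). (\<pi> i, l)) (Sigma I (\<lambda>i. {..<(\<kappa> \<circ> \<pi>) i})) (Sigma (\<pi> ` I) (\<lambda>i. {..<\<kappa> i}))"
    using inj by (auto simp: bij_betw_def inj_on_def)
  show "fst ` R = I \<longleftrightarrow> fst ` (\<lambda>(i, l). (\<pi> i, l)) ` R = \<pi> ` I" for R
  proof -
    have "fst ` (\<lambda>(i, l). (\<pi> i, l)) ` R = \<pi> ` fst ` R" by (force simp: image_image)
    then show ?thesis using inj by (simp add: inj_image_eq_iff)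
  qed
qed

section \<open>The potential and chains that decrease it\<close>

definition potential :: "nat \<Rightarrow> real" where
  "potential a = 1 - 1 / real a"

lemma potential_gap:
  fixes p d b :: nat
  assumes "1 \<le> p" "p + d \<le> b"
  shows "potential p \<le> potential b - real d / (real b)^2"
proof -
  have pb: "real p > 0" "real b > 0" using assms by auto
  have "real p * (real b + real d) \<le> (real b - real d) * (real b + real d)"
    using assms by (intro mult_right_mono) auto
  also have "\<dots> \<le> (real b)^2" by (simp add: algebra_simps power2_eq_square)
  finally have h: "real p * (real b + real d) \<le> (real b)^2" .
  have "1 / real b + real d / (real b)^2 = (real b + real d) / (real b)^2"
    using pb by (simp add: field_simps power2_eq_square)
  also have "\<dots> \<le> 1 / real p"
    using h pb by (simp add: field_simps)
  finally show ?thesis unfolding potential_def by simp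
qed

lemma potential_nonneg: "0 \<le> potential a"
proof (cases "a = 0")
  case False
  then have "1 / real a \<le> 1" by simp
  then show ?thesis unfolding potential_def by simp
qed (simp add: potential_def)

lemma potential_le_1: "potential a \<le> 1"
  unfolding potential_def by simp

lemma s_o_averaging_bound:
  fixes L b x :: nat
  assumes "2 \<le> b" "b \<le> x"
  shows "real (x choose b) * (2 * real L / (real x * (real x - 1))) / 4
    \<le> real L * real ((x - 2) choose (b - 2)) / (real b)^2"
proof -
  define u where "u = real x * (real x - 1)"
  define w where "w = real b * (real b - 1)"
  have u: "u > 0" and w: "w > 0" using assms unfolding u_def w_def by auto
  have "real ((x choose b) * b * (b - 1)) = real (x * (x - 1) * ((x - 2) choose (b - 2)))"
    using choose_mult_pred[OF assms] by simp
  then have id: "real (x choose b) * w = u * real ((x - 2) choose (b - 2))"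
    using assms unfolding u_def w_def by (simp add: of_nat_diff algebra_simps)
  have "real (x choose b) * (2 * real L / u) / 4 = real L * (real (x choose b) * w) / (2 * w * u)"
    using u w by (simp add: field_simps)
  also have "\<dots> = real L * real ((x - 2) choose (b - 2)) / (2 * w)"
    unfolding id using u w by (simp add: field_simps)
  also have "\<dots> \<le> real L * real ((x - 2) choose (b - 2)) / (real b)^2"
    using assms(1) w unfolding w_def by (intro divide_left_mono) (auto simp: power2_eq_square algebra_simps)
  finally show ?thesis unfolding u_def .
qed

lemma t_o_diff: "t_o X k (n + d) - t_o X k n = (\<Sum>l<d. s_o X k (n + l))"
  by (induction d) (simp_all add: t_o_def)

lemma s_o_nonneg: "0 \<le> s_o X k j"
  unfolding s_o_def by (cases "X (Suc j)") auto

text \<open>Levels are counted downwards: kernel_iter Y q d b a is the probability of passing from state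
  b at level d to state a at level 0 under the kernels q (d - 1), ..., q 0, where q l maps states
  in {1..Y (l + 1)} to states in {1..Y l}.\<close>
primrec kernel_iter :: "(nat \<Rightarrow> nat) \<Rightarrow> (nat \<Rightarrow> nat \<Rightarrow> nat \<Rightarrow> real) \<Rightarrow> nat \<Rightarrow> nat \<Rightarrow> nat \<Rightarrow> real" where
  "kernel_iter Y q 0 b a = (if b = a then 1 else 0)"
| "kernel_iter Y q (Suc d) b a = (\<Sum>b'\<in>{1..Y d}. q d b b' * kernel_iter Y q d b' a)"

locale potential_chain =
  fixes Y :: "nat \<Rightarrow> nat" and q :: "nat \<Rightarrow> nat \<Rightarrow> nat \<Rightarrow> real" and \<sigma> :: "nat \<Rightarrow> real"
  assumes q_nonneg: "\<And>d b b'. b \<in> {1..Y (Suc d)} \<Longrightarrow> 0 \<le> q d b b'"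
    and q_sum: "\<And>d b. b \<in> {1..Y (Suc d)} \<Longrightarrow> (\<Sum>b'\<in>{1..Y d}. q d b b') = 1"
    and q_nonincreasing: "\<And>d b b'. b \<in> {1..Y (Suc d)} \<Longrightarrow> b < b' \<Longrightarrow> q d b b' = 0"
    and q_potential: "\<And>d b. b \<in> {1..Y (Suc d)} \<Longrightarrow>
       (\<Sum>b'\<in>{1..Y d}. q d b b' * potential b') \<le> potential b - (if 2 \<le> b then \<sigma> d / 4 else 0)"
    and \<sigma>_nonneg: "\<And>d. 0 \<le> \<sigma> d"
begin

definition ge2_mass :: "nat \<Rightarrow> nat \<Rightarrow> real" where
  "ge2_mass d b = (\<Sum>a\<in>{2..Y 0}. kernel_iter Y q d b a)"

definition potential_mass :: "nat \<Rightarrow> nat \<Rightarrow> real" where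
  "potential_mass d b = (\<Sum>a\<in>{1..Y 0}. kernel_iter Y q d b a * potential a)"

lemma ge2_mass_Suc: "ge2_mass (Suc d) b = (\<Sum>b'\<in>{1..Y d}. q d b b' * ge2_mass d b')"
  unfolding ge2_mass_def by (simp add: sum_distrib_left sum.swap[of _ "{2..Y 0}"])

lemma potential_mass_Suc: "potential_mass (Suc d) b = (\<Sum>b'\<in>{1..Y d}. q d b b' * potential_mass d b')"
  unfolding potential_mass_def
  by (simp add: sum_distrib_left sum_distrib_right mult.assoc) (rule sum.swap)

lemma kernel_iter_nonneg: "b \<in> {1..Y d} \<Longrightarrow> 0 \<le> kernel_iter Y q d b a"
  by (induction d arbitrary: b) (auto intro!: sum_nonneg mult_nonneg_nonneg q_nonneg)

lemma ge2_mass_le: "b \<in> {1..Y d} \<Longrightarrow> ge2_mass d b \<le> (if 2 \<le> b then 1 else 0)"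
proof (induction d arbitrary: b)
  case 0
  then show ?case unfolding ge2_mass_def by (simp add: sum.delta')
next
  case (Suc d)
  have "ge2_mass (Suc d) b \<le> (\<Sum>b'\<in>{1..Y d}. q d b b' * (if 2 \<le> b' then 1 else 0))"
    unfolding ge2_mass_Suc using Suc q_nonneg by (auto intro!: sum_mono mult_left_mono)
  also have "\<dots> \<le> (if 2 \<le> b then 1 else 0)"
  proof (cases "2 \<le> b")
    case True
    have "(\<Sum>b'\<in>{1..Y d}. q d b b' * (if 2 \<le> b' then 1 else 0)) \<le> (\<Sum>b'\<in>{1..Y d}. q d b b')"
      using q_nonneg[OF Suc.prems] by (intro sum_mono) auto
    then show ?thesis using q_sum[OF Suc.prems] True by simp
  next
    case False
    then have "q d b b' * (if 2 \<le> b' then 1 else 0) = 0" for b'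
      using Suc.prems q_nonincreasing[OF Suc.prems, of b'] by auto
    then show ?thesis using False by (simp only: sum.neutral_const) simp
  qed
  finally show ?case .
qed

text \<open>The supermartingale inequality for the potential, summed along the chain.\<close>
lemma potential_mass_drift:
  "b \<in> {1..Y d} \<Longrightarrow> potential_mass d b + (\<Sum>l<d. \<sigma> l) * ge2_mass d b / 4 \<le> potential b"
proof (induction d arbitrary: b)
  case 0
  have "potential_mass 0 b = (\<Sum>a\<in>{1..Y 0}. if b = a then potential a else 0)"
    unfolding potential_mass_def by (intro sum.cong) auto
  then show ?case using 0 by (simp add: sum.delta)
next
  case (Suc d)
  define T where "T = (\<Sum>l<d. \<sigma> l)"
  have "potential_mass (Suc d) b \<le> (\<Sum>b'\<in>{1..Y d}. q d b b' * (potential b' - T * ge2_mass d b' / 4))"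
    unfolding potential_mass_Suc T_def
    using Suc.IH q_nonneg[OF Suc.prems] by (intro sum_mono mult_left_mono) (auto simp: algebra_simps)
  also have "\<dots> = (\<Sum>b'\<in>{1..Y d}. q d b b' * potential b') - T * ge2_mass (Suc d) b / 4"
    unfolding ge2_mass_Suc by (simp add: algebra_simps sum_subtractf sum_distrib_left sum_divide_distrib)
  also have "\<dots> \<le> potential b - (if 2 \<le> b then \<sigma> d / 4 else 0) - T * ge2_mass (Suc d) b / 4"
    using q_potential[OF Suc.prems] by simp
  also have "\<dots> \<le> potential b - \<sigma> d * ge2_mass (Suc d) b / 4 - T * ge2_mass (Suc d) b / 4"
    using mult_left_mono[OF ge2_mass_le[OF Suc.prems] \<sigma>_nonneg[of d]] by (auto split: if_splits)
  finally show ?case unfolding T_def by (simp add: algebra_simps add_divide_distrib)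
qed

lemma ge2_mass_bound:
  assumes b: "b \<in> {1..Y d}"
  shows "(\<Sum>l<d. \<sigma> l) * (\<Sum>a\<in>{2..Y 0}. kernel_iter Y q d b a) \<le> 4"
proof -
  have "0 \<le> potential_mass d b"
    unfolding potential_mass_def using kernel_iter_nonneg[OF b] potential_nonneg
    by (simp add: sum_nonneg)
  then have "(\<Sum>l<d. \<sigma> l) * ge2_mass d b / 4 \<le> 1"
    using potential_mass_drift[OF b] potential_le_1[of b] by linarith
  then show ?thesis unfolding ge2_mass_def by simp
qed

end

section \<open>Single realisations of the genealogy\<close>

definition parents :: "(nat \<Rightarrow> nat) \<Rightarrow> edge set \<Rightarrow> nat \<Rightarrow> vertex set \<Rightarrow> vertex set" where
  "parents X E j R = {v \<in> gen X j. \<exists>w\<in>R. (v, w) \<in> E}"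

definition ancestors :: "(nat \<Rightarrow> nat) \<Rightarrow> edge set \<Rightarrow> nat \<Rightarrow> vertex set \<Rightarrow> vertex set" where
  "ancestors X E n T = {u \<in> gen X n. \<exists>t\<in>T. (u, t) \<in> E\<^sup>*}"

definition children :: "edge set \<Rightarrow> vertex \<Rightarrow> vertex set" where
  "children E v = {w. (v, w) \<in> E}"

locale genealogy =
  fixes X :: "nat \<Rightarrow> nat" and k :: "nat \<Rightarrow> nat \<Rightarrow> nat" and E :: "edge set"
  assumes edges: "genealogy_edges X k E"
begin

lemma edges_in_slots: "E \<subseteq> (\<Union>n. slots X n)"
  using edges by (simp add: genealogy_edges_def)

lemma edge_gen:
  assumes "(v, w) \<in> E"
  shows "v \<in> gen X (fst v)" "w \<in> gen X (Suc (fst v))" "fst w = Suc (fst v)"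
proof -
  obtain n where "(v, w) \<in> slots X n" using edges_in_slots assms by blast
  then have "v \<in> gen X n" "w \<in> gen X (Suc n)" by (auto simp: slots_def)
  moreover have "fst v = n" using \<open>v \<in> gen X n\<close> by (simp add: mem_gen)
  ultimately show "v \<in> gen X (fst v)" "w \<in> gen X (Suc (fst v))" "fst w = Suc (fst v)"
    by (auto simp: mem_gen)
qed

lemma edge_slot: "(v, w) \<in> E \<Longrightarrow> (v, w) \<in> slots X (fst v)"
  using edge_gen[of v w] by (simp add: slots_def)

lemma path_within_levels:
  assumes "(u, t) \<in> E\<^sup>*"
  shows "fst u \<le> fst t \<and> (u, t) \<in> (E \<inter> {x. fst u \<le> fst (fst x) \<and> fst (fst x) < fst t})\<^sup>*"
  using assms
proof (induction rule: rtrancl_induct)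
  case base
  then show ?case by simp
next
  case (step y z)
  have lz: "fst z = Suc (fst y)" using edge_gen(3)[OF step.hyps(2)] .
  have "(u, y) \<in> (E \<inter> {x. fst u \<le> fst (fst x) \<and> fst (fst x) < fst z})\<^sup>*"
    using step.IH lz by (auto elim!: rtrancl_mono[THEN subsetD, rotated])
  moreover have "(y, z) \<in> E \<inter> {x. fst u \<le> fst (fst x) \<and> fst (fst x) < fst z}"
    using step.hyps(2) step.IH lz by auto
  ultimately show ?case using step.IH lz by (auto intro: rtrancl_into_rtrancl)
qed

lemma path_same_level: "(u, t) \<in> E\<^sup>* \<Longrightarrow> fst u = fst t \<Longrightarrow> u = t"
proof -
  assume "(u, t) \<in> E\<^sup>*" "fst u = fst t"
  then have "(u, t) \<in> (E \<inter> {x. fst u \<le> fst (fst x) \<and> fst (fst x) < fst t})\<^sup>*"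
    using path_within_levels by blast
  moreover have "E \<inter> {x. fst u \<le> fst (fst x) \<and> fst (fst x) < fst t} = {}"
    using \<open>fst u = fst t\<close> by auto
  ultimately show "u = t" by simp
qed

lemma path_within_slots:
  assumes "(u, t) \<in> E\<^sup>*"
  shows "(u, t) \<in> (E \<inter> (\<Union>l\<in>{fst u..<fst t}. slots X l))\<^sup>*"
proof -
  have "E \<inter> {x. fst u \<le> fst (fst x) \<and> fst (fst x) < fst t} \<subseteq> E \<inter> (\<Union>l\<in>{fst u..<fst t}. slots X l)"
    using edge_slot by fastforce
  then show ?thesis using path_within_levels[OF assms] rtrancl_mono by blast
qed

lemma parent_ex1: "w \<in> gen X (Suc n) \<Longrightarrow> \<exists>!v. v \<in> gen X n \<and> (v, w) \<in> E"
  using edges by (simp add: genealogy_edges_def)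

lemma parent_gen: "(v, w) \<in> E \<Longrightarrow> w \<in> gen X (Suc n) \<Longrightarrow> v \<in> gen X n"
  using edge_gen[of v w] by (auto simp: mem_gen)

lemma parent_unique: "(v, w) \<in> E \<Longrightarrow> (v', w) \<in> E \<Longrightarrow> v = v'"
proof -
  assume a: "(v, w) \<in> E" "(v', w) \<in> E"
  have "w \<in> gen X (Suc (fst v))" "fst w = Suc (fst v)" "fst w = Suc (fst v')"
    using edge_gen(2)[OF a(1)] edge_gen(3)[OF a(1)] edge_gen(3)[OF a(2)] by blast+
  then have "fst v = fst v'" by simp
  then have "v \<in> gen X (fst v)" "v' \<in> gen X (fst v)" using a edge_gen(1) by metis+
  then show ?thesis using parent_ex1[OF \<open>w \<in> gen X (Suc (fst v))\<close>] a by blast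
qed

lemma ancestor_exists: "t \<in> gen X m \<Longrightarrow> n \<le> m \<Longrightarrow> \<exists>u \<in> gen X n. (u, t) \<in> E\<^sup>*"
proof (induction "m - n" arbitrary: m t)
  case 0
  then have "m = n" by simp
  then show ?case using 0 by auto
next
  case (Suc d)
  then obtain m' where m': "m = Suc m'" "n \<le> m'" by (cases m) auto
  obtain v where v: "v \<in> gen X m'" "(v, t) \<in> E" using parent_ex1 Suc.prems m' by blast
  have "d = m' - n" using Suc.hyps(2) m' by simp
  then have "\<exists>u\<in>gen X n. (u, v) \<in> E\<^sup>*" using Suc.hyps(1)[of m' v] m' v by blast
  then obtain u where "u \<in> gen X n" "(u, v) \<in> E\<^sup>*" by blast
  then show ?case using v by (meson rtrancl.rtrancl_into_rtrancl)
qed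

lemma parents_subset: "parents X E j R \<subseteq> gen X j" by (auto simp: parents_def)

lemma parents_nonempty: assumes "R \<subseteq> gen X (Suc j)" "R \<noteq> {}" shows "parents X E j R \<noteq> {}"
proof -
  obtain w where w: "w \<in> R" using assms by blast
  then obtain v where "v \<in> gen X j" "(v, w) \<in> E" using parent_ex1 assms(1) by blast
  then have "v \<in> parents X E j R" unfolding parents_def using w by blast
  then show ?thesis by blast
qed

definition parent :: "nat \<Rightarrow> vertex \<Rightarrow> vertex" where
  "parent j w = (THE v. v \<in> gen X j \<and> (v, w) \<in> E)"

lemma parent_edge: assumes "w \<in> gen X (Suc j)" shows "parent j w \<in> gen X j" "(parent j w, w) \<in> E"
proof -
  have "\<exists>!v. v \<in> gen X j \<and> (v, w) \<in> E" using parent_ex1[OF assms] .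
  then have "parent j w \<in> gen X j \<and> (parent j w, w) \<in> E" unfolding parent_def by (rule theI')
  then show "parent j w \<in> gen X j" "(parent j w, w) \<in> E" by blast+
qed

lemma parents_eq_image_parent: assumes "R \<subseteq> gen X (Suc j)" shows "parents X E j R = parent j ` R"
proof
  show "parents X E j R \<subseteq> parent j ` R"
  proof
    fix v assume "v \<in> parents X E j R"
    then obtain w where w: "w \<in> R" "v \<in> gen X j" "(v, w) \<in> E" unfolding parents_def by blast
    have "w \<in> gen X (Suc j)" using w(1) assms by blast
    then have "parent j w = v" using parent_edge[of w j] w parent_unique by blast
    then show "v \<in> parent j ` R" using w(1) by blast
  qed
  show "parent j ` R \<subseteq> parents X E j R"
  proof
    fix v assume "v \<in> parent j ` R"
    then obtain w where w: "w \<in> R" "v = parent j w" by blast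
    have "w \<in> gen X (Suc j)" using w(1) assms by blast
    then show "v \<in> parents X E j R" using parent_edge[of w j] w unfolding parents_def by blast
  qed
qed

lemma card_parents_le: assumes "R \<subseteq> gen X (Suc j)" shows "card (parents X E j R) \<le> card R"
  unfolding parents_eq_image_parent[OF assms] using finite_subset[OF assms finite_gen]
    by (rule card_image_le)

lemma finite_parents[simp]: "finite (parents X E j R)"
  using parents_subset finite_gen finite_subset by blast

lemma card_parents_ge1: "R \<subseteq> gen X (Suc j) \<Longrightarrow> R \<noteq> {} \<Longrightarrow> 1 \<le> card (parents X E j R)"
  using parents_nonempty[of R j] finite_parents[of j R] by (simp add: Suc_le_eq card_gt_0_iff)

lemma ancestors_parents:
  assumes "T \<subseteq> gen X (Suc j)" "n \<le> j"
  shows "ancestors X E n T = ancestors X E n (parents X E j T)"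
proof
  show "ancestors X E n T \<subseteq> ancestors X E n (parents X E j T)"
  proof
    fix u assume "u \<in> ancestors X E n T"
    then obtain t where t: "t \<in> T" "u \<in> gen X n" "(u, t) \<in> E\<^sup>*" unfolding ancestors_def by blast
    have "t \<in> gen X (Suc j)" using t(1) assms(1) by blast
    then have "fst t = Suc j" "fst u = n" using t(2) by (simp_all add: mem_gen)
    then have "u \<noteq> t" using assms(2) by auto
    then obtain y where y: "(u, y) \<in> E\<^sup>*" "(y, t) \<in> E" using t(3) by (metis rtranclE)
    have "y \<in> gen X j" using parent_gen y(2) t(1) assms(1) by blast
    then have "y \<in> parents X E j T" using y t unfolding parents_def by blast
    then show "u \<in> ancestors X E n (parents X E j T)" using y t unfolding ancestors_def by blast
  qed
next
  show "ancestors X E n (parents X E j T) \<subseteq> ancestors X E n T"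
  proof
    fix u assume "u \<in> ancestors X E n (parents X E j T)"
    then obtain v where v: "v \<in> parents X E j T" "u \<in> gen X n" "(u, v) \<in> E\<^sup>*" unfolding ancestors_def
      by blast
    then obtain t where t: "t \<in> T" "(v, t) \<in> E" unfolding parents_def by blast
    have "(u, t) \<in> E\<^sup>*" using v(3) t(2) by (rule rtrancl_into_rtrancl)
    then show "u \<in> ancestors X E n T" using v(2) t(1) unfolding ancestors_def by blast
  qed
qed

lemma ancestors_same_gen: assumes "T \<subseteq> gen X n" shows "ancestors X E n T = T"
proof
  show "ancestors X E n T \<subseteq> T"
  proof
    fix u assume "u \<in> ancestors X E n T"
    then obtain t where t: "t \<in> T" "u \<in> gen X n" "(u, t) \<in> E\<^sup>*" unfolding ancestors_def by blast
    have "t \<in> gen X n" using t(1) assms by blast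
    then have "fst u = fst t" using t(2) by (simp add: mem_gen)
    then have "u = t" using path_same_level t(3) by blast
    then show "u \<in> T" using t by simp
  qed
  show "T \<subseteq> ancestors X E n T" using assms unfolding ancestors_def by blast
qed

lemma ancestors_step:
  assumes "j < m"
  shows "ancestors X E j (gen X m) = parents X E j (ancestors X E (Suc j) (gen X m))"
proof
  show "ancestors X E j (gen X m) \<subseteq> parents X E j (ancestors X E (Suc j) (gen X m))"
  proof
    fix u assume "u \<in> ancestors X E j (gen X m)"
    then obtain t where t: "t \<in> gen X m" "u \<in> gen X j" "(u, t) \<in> E\<^sup>*" unfolding ancestors_def by blast
    have "fst u = j" "fst t = m" using t by (simp_all add: mem_gen)
    then have "u \<noteq> t" using assms by auto
    then obtain y where y: "(u, y) \<in> E" "(y, t) \<in> E\<^sup>*" using t(3) by (metis converse_rtranclE)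
    have "y \<in> gen X (Suc j)" using edge_gen(2)[OF y(1)] \<open>fst u = j\<close> by simp
    then have "y \<in> ancestors X E (Suc j) (gen X m)" using y t unfolding ancestors_def by blast
    then show "u \<in> parents X E j (ancestors X E (Suc j) (gen X m))"
      using y t unfolding parents_def by blast
  qed
next
  show "parents X E j (ancestors X E (Suc j) (gen X m)) \<subseteq> ancestors X E j (gen X m)"
  proof
    fix u assume "u \<in> parents X E j (ancestors X E (Suc j) (gen X m))"
    then obtain v where v: "v \<in> ancestors X E (Suc j) (gen X m)" "u \<in> gen X j" "(u, v) \<in> E"
      unfolding parents_def by blast
    then obtain t where t: "t \<in> gen X m" "(v, t) \<in> E\<^sup>*" unfolding ancestors_def by blast
    have "(u, t) \<in> E\<^sup>*" using v(3) t(2) by (rule converse_rtrancl_into_rtrancl)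
    then show "u \<in> ancestors X E j (gen X m)" using v(2) t(1) unfolding ancestors_def by blast
  qed
qed

lemma ancestors_subset: "ancestors X E n T \<subseteq> gen X n" unfolding ancestors_def by blast

lemma ancestors_gen_nonempty:
  assumes "n \<le> m" "0 < X m"
  shows "ancestors X E n (gen X m) \<noteq> {}"
proof -
  have "(m, 1) \<in> gen X m" using assms by (simp add: gen_def)
  then obtain u where "u \<in> gen X n" "(u, (m,1)) \<in> E\<^sup>*" using ancestor_exists[OF _ assms(1)] by blast
  then show ?thesis using \<open>(m, 1) \<in> gen X m\<close> unfolding ancestors_def by blast
qed

lemma children_subset: "v \<in> gen X j \<Longrightarrow> children E v \<subseteq> gen X (Suc j)"
proof
  fix w assume v: "v \<in> gen X j" and "w \<in> children E v"
  then have e: "(v, w) \<in> E" unfolding children_def by blast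
  have "fst v = j" using v by (simp add: mem_gen)
  then show "w \<in> gen X (Suc j)" using edge_gen(2)[OF e] by simp
qed

lemma finite_children: "v \<in> gen X j \<Longrightarrow> finite (children E v)"
  by (rule finite_subset[OF children_subset]) simp_all

lemma desc_Suc_eq_children: assumes v: "v \<in> gen X j" shows "desc X E (Suc j) v = children E v"
proof -
  have *: "(v, w) \<in> E" if w: "w \<in> gen X (Suc j)" "(v, w) \<in> E\<^sup>*" for w
  proof -
    have fv: "fst v = j" "fst w = Suc j" using v w by (simp_all add: mem_gen)
    then have "v \<noteq> w" by auto
    with w(2) obtain y where y: "(v, y) \<in> E" "(y, w) \<in> E\<^sup>*"
      by (cases rule: converse_rtranclE) auto
    have "fst y = fst w" using edge_gen(3)[OF y(1)] fv by simp
    then have "y = w" using path_same_level[OF y(2)] by simp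
    then show ?thesis using y(1) by simp
  qed
  show ?thesis
  proof
    show "desc X E (Suc j) v \<subseteq> children E v" unfolding desc_def children_def using * by blast
    show "children E v \<subseteq> desc X E (Suc j) v" using children_subset[OF v]
      unfolding desc_def children_def by blast
  qed
qed

lemma mem_parents_iff: "v \<in> parents X E j S \<longleftrightarrow> v \<in> gen X j \<and> children E v \<inter> S \<noteq> {}"
  unfolding parents_def children_def by blast

lemma sibpart_eq_children: "sibpart X E j = children E ` gen X j - {{}}"
proof -
  have "desc X E (Suc j) ` gen X j = children E ` gen X j"
    using desc_Suc_eq_children by (rule image_cong[OF refl])
  then show ?thesis unfolding sibpart_def by simp
qed

lemma card_sibpart_meeting:
  assumes "S \<subseteq> gen X (Suc j)"
  shows "card {B \<in> sibpart X E j. B \<inter> S \<noteq> {}} = card (parents X E j S)"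
proof -
  have "{B \<in> sibpart X E j. B \<inter> S \<noteq> {}} = children E ` parents X E j S"
    unfolding sibpart_eq_children using mem_parents_iff by blast
  moreover have "inj_on (children E) (parents X E j S)"
  proof (rule inj_onI)
    fix v v' assume v: "v \<in> parents X E j S" "v' \<in> parents X E j S" "children E v = children E v'"
    then obtain w where "w \<in> children E v" using mem_parents_iff by blast
    then have "(v, w) \<in> E" "(v', w) \<in> E" using v(3) unfolding children_def by auto
    then show "v = v'" using parent_unique by blast
  qed
  ultimately show ?thesis by (simp add: card_image)
qed

lemma outdeg_eq_card_children: "outdeg E v = card (children E v)"
  unfolding outdeg_def children_def by simp

lemma Kvec_eq_card_children: "i \<in> {1..X j} \<Longrightarrow> Kvec X E j i = card (children E (j, i))"
  unfolding Kvec_def outdeg_eq_card_children by simp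

lemma parents_restrict: "parents X E j R = parents X (E \<inter> slots X j) j R"
proof
  show "parents X E j R \<subseteq> parents X (E \<inter> slots X j) j R"
  proof
    fix v assume "v \<in> parents X E j R"
    then obtain w where w: "v \<in> gen X j" "w \<in> R" "(v, w) \<in> E" unfolding parents_def by blast
    have "fst v = j" using w(1) by (simp add: mem_gen)
    then have "(v, w) \<in> slots X j" using edge_slot[OF w(3)] by simp
    then show "v \<in> parents X (E \<inter> slots X j) j R" using w unfolding parents_def by blast
  qed
  show "parents X (E \<inter> slots X j) j R \<subseteq> parents X E j R" unfolding parents_def by blast
qed

lemma ancestors_restrict:
  assumes "T \<subseteq> gen X j"
  shows "ancestors X E n T = ancestors X (E \<inter> (\<Union>l\<in>{n..<j}. slots X l)) n T"
proof
  show "ancestors X E n T \<subseteq> ancestors X (E \<inter> (\<Union>l\<in>{n..<j}. slots X l)) n T"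
  proof
    fix u assume "u \<in> ancestors X E n T"
    then obtain t where t: "u \<in> gen X n" "t \<in> T" "(u, t) \<in> E\<^sup>*" unfolding ancestors_def by blast
    have "t \<in> gen X j" using t(2) assms by blast
    then have "fst u = n" "fst t = j" using t(1) by (simp_all add: mem_gen)
    then have "(u, t) \<in> (E \<inter> (\<Union>l\<in>{n..<j}. slots X l))\<^sup>*" using path_within_slots[OF t(3)] by simp
    then show "u \<in> ancestors X (E \<inter> (\<Union>l\<in>{n..<j}. slots X l)) n T" using t unfolding ancestors_def by blast
  qed
  show "ancestors X (E \<inter> (\<Union>l\<in>{n..<j}. slots X l)) n T \<subseteq> ancestors X E n T"
  proof
    fix u assume "u \<in> ancestors X (E \<inter> (\<Union>l\<in>{n..<j}. slots X l)) n T"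
    then obtain t where t: "u \<in> gen X n" "t \<in> T" "(u, t) \<in> (E \<inter> (\<Union>l\<in>{n..<j}. slots X l))\<^sup>*"
      unfolding ancestors_def by blast
    have "(u, t) \<in> E\<^sup>*" using rtrancl_mono[of "E \<inter> (\<Union>l\<in>{n..<j}. slots X l)" E] t(3) by blast
    then show "u \<in> ancestors X E n T" using t unfolding ancestors_def by blast
  qed
qed

lemma children_restrict: assumes "v \<in> gen X j" shows "children E v = children (E \<inter> slots X j) v"
proof
  show "children E v \<subseteq> children (E \<inter> slots X j) v"
  proof
    fix w assume "w \<in> children E v"
    then have e: "(v, w) \<in> E" unfolding children_def by blast
    have "fst v = j" using assms by (simp add: mem_gen)
    then have "(v, w) \<in> slots X j" using edge_slot[OF e] by simp
    then show "w \<in> children (E \<inter> slots X j) v" using e unfolding children_def by blast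
  qed
  show "children (E \<inter> slots X j) v \<subseteq> children E v" unfolding children_def by blast
qed

lemma Kvec_restrict: "Kvec X E j = (\<lambda>i. if i \<in> {1..X j} then card (children (E \<inter> slots X j) (j, i)) else 0)"
proof
  fix i show "Kvec X E j i = (if i \<in> {1..X j} then card (children (E \<inter> slots X j) (j, i)) else 0)"
    using children_restrict[of "(j, i)" j] Kvec_eq_card_children[of i j] by (simp add: Kvec_def gen_def)
qed

lemma sibpart_restrict: "sibpart X E j = children (E \<inter> slots X j) ` gen X j - {{}}"
  unfolding sibpart_eq_children using children_restrict by (metis (no_types, lifting) image_cong)

lemma card_multi_child_vertices: "card {v \<in> gen X j. 2 \<le> outdeg E v} = Lcnt X k j"
proof -
  obtain p where p: "p permutes {1..X j}" "\<forall>i\<in>{1..X j}. outdeg E (j, i) = k j (p i)"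
    using edges unfolding genealogy_edges_def by blast
  have "{v \<in> gen X j. 2 \<le> outdeg E v} = Pair j ` {i \<in> {1..X j}. 2 \<le> k j (p i)}"
    using p(2) by (force simp: gen_def)
  then have "card {v \<in> gen X j. 2 \<le> outdeg E v} = card {i \<in> {1..X j}. 2 \<le> k j (p i)}"
    by (simp add: card_image inj_on_def)
  also have "\<dots> = Lcnt X k j"
    unfolding Lcnt_def using card_filter_permutes[OF p(1)] .
  finally show ?thesis .
qed

lemma card_eq_sum_children:
  assumes R: "R \<subseteq> gen X (Suc j)"
  shows "card R = (\<Sum>v\<in>parents X E j R. card (children E v \<inter> R))"
proof -
  have "R \<subseteq> (\<Union>v\<in>parents X E j R. children E v \<inter> R)"
  proof
    fix w assume "w \<in> R"
    with R obtain v where "v \<in> gen X j" "(v, w) \<in> E" using parent_ex1 by blast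
    with \<open>w \<in> R\<close> show "w \<in> (\<Union>v\<in>parents X E j R. children E v \<inter> R)"
      unfolding parents_def children_def by blast
  qed
  then have "R = (\<Union>v\<in>parents X E j R. children E v \<inter> R)" by blast
  moreover have "disjoint_family_on (\<lambda>v. children E v \<inter> R) (parents X E j R)"
    unfolding disjoint_family_on_def children_def using parent_unique by blast
  moreover have "finite (children E v \<inter> R)" for v
    using finite_subset[OF R finite_gen] by simp
  ultimately show ?thesis
    using card_UN_disjoint'[OF _ _ finite_parents] by metis
qed

lemma card_parents_add_le:
  assumes R: "R \<subseteq> gen X (Suc j)" and D: "D \<subseteq> gen X j"
    and two: "\<And>v. v \<in> D \<Longrightarrow> 2 \<le> card (children E v \<inter> R)"
  shows "card (parents X E j R) + card D \<le> card R"
proof -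
  have DR: "D \<subseteq> parents X E j R"
  proof
    fix v assume "v \<in> D"
    then have "children E v \<inter> R \<noteq> {}" using two[of v] by (auto simp del: Int_iff)
    then show "v \<in> parents X E j R" using D \<open>v \<in> D\<close> mem_parents_iff by blast
  qed
  have "card (parents X E j R) + card D = (\<Sum>v\<in>parents X E j R. 1 + of_bool (v \<in> D))"
  proof -
    have "(\<Sum>v\<in>parents X E j R. of_bool (v \<in> D)) = card D"
      using DR by (simp add: Int_absorb1)
    then show ?thesis by (simp only: sum.distrib card_eq_sum)
  qed
  also have "\<dots> \<le> (\<Sum>v\<in>parents X E j R. card (children E v \<inter> R))"
  proof (rule sum_mono)
    fix v assume "v \<in> parents X E j R"
    then have "children E v \<inter> R \<noteq> {}" using mem_parents_iff by blast
    then have "1 \<le> card (children E v \<inter> R)"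
      using finite_subset[OF R finite_gen] by (simp add: Suc_le_eq card_gt_0_iff)
    then show "1 + of_bool (v \<in> D) \<le> card (children E v \<inter> R)"
      using two[of v] by (cases "v \<in> D") simp_all
  qed
  also have "\<dots> = card R" using card_eq_sum_children[OF R] ..
  finally show ?thesis .
qed

definition child_pair :: "vertex \<Rightarrow> vertex set" where
  "child_pair v = (SOME P. P \<subseteq> children E v \<and> card P = 2)"

lemma child_pair:
  assumes "2 \<le> outdeg E v"
  shows "child_pair v \<subseteq> children E v" "card (child_pair v) = 2"
proof -
  obtain P where "P \<subseteq> children E v" "card P = 2"
    using assms unfolding outdeg_eq_card_children by (rule obtain_subset_with_card_n)
  then have "\<exists>P. P \<subseteq> children E v \<and> card P = 2" by blast
  from someI_ex[OF this] have "child_pair v \<subseteq> children E v \<and> card (child_pair v) = 2"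
    unfolding child_pair_def .
  then show "child_pair v \<subseteq> children E v" "card (child_pair v) = 2" by blast+
qed

lemma potential_parents_le:
  assumes R: "R \<in> gen_subsets X (Suc j) b" and b: "1 \<le> b"
  shows "potential (card (parents X E j R))
    \<le> potential b - real (card {v \<in> gen X j. 2 \<le> outdeg E v \<and> child_pair v \<subseteq> R}) / (real b)^2"
proof (rule potential_gap)
  have R1: "R \<subseteq> gen X (Suc j)" "card R = b" using R unfolding gen_subsets_def by auto
  show "card (parents X E j R) + card {v \<in> gen X j. 2 \<le> outdeg E v \<and> child_pair v \<subseteq> R} \<le> b"
    unfolding R1(2)[symmetric]
  proof (rule card_parents_add_le[OF R1(1)])
    fix v assume v: "v \<in> {v \<in> gen X j. 2 \<le> outdeg E v \<and> child_pair v \<subseteq> R}"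
    then have "child_pair v \<subseteq> children E v \<inter> R" using child_pair by blast
    then have "card (child_pair v) \<le> card (children E v \<inter> R)"
      using finite_subset[OF R1(1) finite_gen] by (intro card_mono) auto
    then show "2 \<le> card (children E v \<inter> R)" using child_pair v by simp
  qed blast
  have "R \<noteq> {}" using R1(2) b by auto
  then show "1 \<le> card (parents X E j R)" by (rule card_parents_ge1[OF R1(1)])
qed

lemma sum_card_covered_pairs:
  assumes "2 \<le> b"
  shows "(\<Sum>R\<in>gen_subsets X (Suc j) b. card {v \<in> gen X j. 2 \<le> outdeg E v \<and> child_pair v \<subseteq> R})
    = Lcnt X k j * ((X (Suc j) - 2) choose (b - 2))"
proof -
  define L where "L = {v \<in> gen X j. 2 \<le> outdeg E v}"
  have "(\<Sum>R\<in>gen_subsets X (Suc j) b. card {v \<in> L. child_pair v \<subseteq> R})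
      = (\<Sum>v\<in>L. card {R \<in> gen_subsets X (Suc j) b. child_pair v \<subseteq> R})"
  proof -
    have fL: "finite L" unfolding L_def by simp
    have "(\<Sum>R\<in>gen_subsets X (Suc j) b. card {v \<in> L. child_pair v \<subseteq> R})
        = (\<Sum>R\<in>gen_subsets X (Suc j) b. \<Sum>v\<in>L. of_bool (child_pair v \<subseteq> R))"
      using fL by (simp add: Int_def)
    also have "\<dots> = (\<Sum>v\<in>L. \<Sum>R\<in>gen_subsets X (Suc j) b. of_bool (child_pair v \<subseteq> R))"
      by (rule sum.swap)
    finally show ?thesis by (simp add: Int_def)
  qed
  also have "\<dots> = (\<Sum>v\<in>L. (X (Suc j) - 2) choose (b - 2))"
  proof (rule sum.cong[OF refl])
    fix v assume v: "v \<in> L"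
    have "child_pair v \<subseteq> gen X (Suc j)"
      using child_pair(1) children_subset v unfolding L_def by blast
    then show "card {R \<in> gen_subsets X (Suc j) b. child_pair v \<subseteq> R} = (X (Suc j) - 2) choose (b - 2)"
      using card_supersets[of "gen X (Suc j)" "child_pair v" b] child_pair(2) v assms
      unfolding L_def gen_subsets_def by (simp add: conj_assoc)
  qed
  also have "\<dots> = Lcnt X k j * ((X (Suc j) - 2) choose (b - 2))"
    using card_multi_child_vertices unfolding L_def by simp
  finally show ?thesis unfolding L_def by (simp add: conj_assoc)
qed

lemma potential_parents_sum_le:
  assumes b: "1 \<le> b" "b \<le> X (Suc j)"
  shows "(\<Sum>R\<in>gen_subsets X (Suc j) b. potential (card (parents X E j R)))
    \<le> real (X (Suc j) choose b) * (potential b - (if 2 \<le> b then s_o X k j / 4 else 0))"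
proof -
  define c where "c R = real (card {v \<in> gen X j. 2 \<le> outdeg E v \<and> child_pair v \<subseteq> R})" for R
  have "(\<Sum>R\<in>gen_subsets X (Suc j) b. potential (card (parents X E j R)))
      \<le> (\<Sum>R\<in>gen_subsets X (Suc j) b. potential b - c R / (real b)^2)"
    using potential_parents_le b(1) unfolding c_def by (intro sum_mono) auto
  also have "\<dots> = real (X (Suc j) choose b) * potential b - (\<Sum>R\<in>gen_subsets X (Suc j) b. c R) / (real b)^2"
    by (simp add: sum_subtractf sum_divide_distrib card_gen_subsets)
  also have "\<dots> \<le> real (X (Suc j) choose b) * (potential b - (if 2 \<le> b then s_o X k j / 4 else 0))"
  proof (cases "2 \<le> b")
    case True
    have "(\<Sum>R\<in>gen_subsets X (Suc j) b. c R) = real (Lcnt X k j * ((X (Suc j) - 2) choose (b - 2)))"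
      unfolding c_def of_nat_sum[symmetric] sum_card_covered_pairs[OF True] ..
    then have "real (X (Suc j) choose b) * (s_o X k j / 4) \<le> (\<Sum>R\<in>gen_subsets X (Suc j) b. c R) / (real b)^2"
      using s_o_averaging_bound[OF True b(2), of "Lcnt X k j"] unfolding s_o_def by (simp add: mult.commute)
    then show ?thesis using True by (simp add: right_diff_distrib)
  qed (simp add: c_def sum_nonneg)
  finally show ?thesis .
qed

lemma children_iff_parent:
  assumes "i \<in> {1..X j}"
  shows "w \<in> children E (j, i) \<longleftrightarrow> w \<in> gen X (Suc j) \<and> parent j w = (j, i)"
proof
  assume w: "w \<in> children E (j, i)"
  have "(j, i) \<in> gen X j" using assms by (simp add: gen_def)
  then have wg: "w \<in> gen X (Suc j)" using children_subset w by blast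
  then show "w \<in> gen X (Suc j) \<and> parent j w = (j, i)"
    using parent_edge[OF wg] w parent_unique unfolding children_def by blast
next
  assume "w \<in> gen X (Suc j) \<and> parent j w = (j, i)"
  then show "w \<in> children E (j, i)" using parent_edge(2)[of w j] unfolding children_def by simp
qed

lemma parent_split:
  assumes "w \<in> gen X (Suc j)"
  shows "parent j w = (j, snd (parent j w))" "snd (parent j w) \<in> {1..X j}"
  using parent_edge(1)[OF assms] by (auto simp: gen_def)

lemma sibling_labels:
  obtains \<beta> where "\<And>i. i \<in> {1..X j} \<Longrightarrow> bij_betw (\<beta> i) (children E (j, i)) {..<Kvec X E j i}"
proof -
  have "\<exists>h. bij_betw h (children E (j, i)) {..<Kvec X E j i}" if "i \<in> {1..X j}" for i
  proof -
    have "finite (children E (j, i))" using that by (intro finite_children[of _ j]) (simp add: gen_def)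
    then show ?thesis using Kvec_eq_card_children[OF that] finite_same_card_bij by fastforce
  qed
  then show ?thesis using that by metis
qed

text \<open>Label each vertex of generation j + 1 by the index of its parent and its rank among
  its siblings.\<close>
lemma children_enumeration:
  obtains \<phi> where "bij_betw \<phi> (gen X (Suc j)) (Sigma {1..X j} (\<lambda>i. {..<Kvec X E j i}))"
    and "\<And>w. w \<in> gen X (Suc j) \<Longrightarrow> fst (\<phi> w) = snd (parent j w)"
proof -
  obtain \<beta> where \<beta>: "\<And>i. i \<in> {1..X j} \<Longrightarrow> bij_betw (\<beta> i) (children E (j, i)) {..<Kvec X E j i}"
    using sibling_labels by blast
  define \<phi> where "\<phi> w = (snd (parent j w), \<beta> (snd (parent j w)) w)" for w
  have "bij_betw \<phi> (gen X (Suc j)) (Sigma {1..X j} (\<lambda>i. {..<Kvec X E j i}))"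
  proof (rule bij_betw_imageI)
    show "inj_on \<phi> (gen X (Suc j))"
    proof (rule inj_onI)
      fix w w' assume w: "w \<in> gen X (Suc j)" "w' \<in> gen X (Suc j)" "\<phi> w = \<phi> w'"
      define i where "i = snd (parent j w)"
      have i: "i \<in> {1..X j}" "snd (parent j w') = i"
        using parent_split(2)[OF w(1)] w(3) unfolding \<phi>_def i_def by simp_all
      have "w \<in> children E (j, i)" "w' \<in> children E (j, i)"
        using children_iff_parent[OF i(1)] w(1,2) parent_split(1) i(2) unfolding i_def by metis+
      moreover have "\<beta> i w = \<beta> i w'" using w(3) i(2) unfolding \<phi>_def i_def by simp
      ultimately show "w = w'" using \<beta>[OF i(1)] unfolding bij_betw_def by (meson inj_onD)
    qed
    show "\<phi> ` gen X (Suc j) = Sigma {1..X j} (\<lambda>i. {..<Kvec X E j i})"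
    proof (intro equalityI subsetI)
      fix x assume "x \<in> \<phi> ` gen X (Suc j)"
      then obtain w where w: "w \<in> gen X (Suc j)" "x = \<phi> w" by blast
      define i where "i = snd (parent j w)"
      have i: "i \<in> {1..X j}" "w \<in> children E (j, i)"
        using parent_split[OF w(1)] children_iff_parent w(1) unfolding i_def by metis+
      then have "\<beta> i w < Kvec X E j i" using \<beta>[OF i(1)] unfolding bij_betw_def by blast
      then show "x \<in> Sigma {1..X j} (\<lambda>i. {..<Kvec X E j i})"
        using i(1) w(2) unfolding \<phi>_def i_def by simp
    next
      fix x assume "x \<in> Sigma {1..X j} (\<lambda>i. {..<Kvec X E j i})"
      then obtain i l where il: "x = (i, l)" "i \<in> {1..X j}" "l < Kvec X E j i" by blast
      then obtain w where "w \<in> children E (j, i)" "\<beta> i w = l"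
        using \<beta>[OF il(2)] unfolding bij_betw_def by (metis imageE lessThan_iff)
      moreover have "w \<in> gen X (Suc j)" "parent j w = (j, i)"
        using children_iff_parent[OF il(2)] calculation(1) by blast+
      ultimately have "\<phi> w = x" using il(1) unfolding \<phi>_def by simp
      then show "x \<in> \<phi> ` gen X (Suc j)" using \<open>w \<in> gen X (Suc j)\<close> by blast
    qed
  qed
  moreover have "fst (\<phi> w) = snd (parent j w)" for w unfolding \<phi>_def by simp
  ultimately show ?thesis using that by blast
qed

lemma card_parent_preimage:
  assumes T: "T \<subseteq> gen X j"
  shows "card {R \<in> gen_subsets X (Suc j) b. parents X E j R = T} = cover_count b (Kvec X E j) (snd ` T)"
proof -
  obtain \<phi> where \<phi>: "bij_betw \<phi> (gen X (Suc j)) (Sigma {1..X j} (\<lambda>i. {..<Kvec X E j i}))"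
    and fst_\<phi>: "\<And>w. w \<in> gen X (Suc j) \<Longrightarrow> fst (\<phi> w) = snd (parent j w)"
    using children_enumeration[of j] by blast
  have snd_inj: "inj_on snd (gen X j)" by (rule inj_onI) (auto simp: gen_def)
  have "card {R. R \<subseteq> gen X (Suc j) \<and> card R = b \<and> parents X E j R = T}
      = card {Q. Q \<subseteq> Sigma {1..X j} (\<lambda>i. {..<Kvec X E j i}) \<and> card Q = b \<and> fst ` Q = snd ` T}"
  proof (rule card_subsets_bij_betw[OF \<phi>])
    fix R assume R: "R \<subseteq> gen X (Suc j)"
    have "fst ` \<phi> ` R = snd ` parents X E j R"
      unfolding parents_eq_image_parent[OF R] image_image using fst_\<phi> R by (intro image_cong) auto
    then show "parents X E j R = T \<longleftrightarrow> fst ` \<phi> ` R = snd ` T"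
      using inj_on_image_eq_iff[OF snd_inj parents_subset T] by simp
  qed
  also have "{Q. Q \<subseteq> Sigma {1..X j} (\<lambda>i. {..<Kvec X E j i}) \<and> card Q = b \<and> fst ` Q = snd ` T}
      = {Q. Q \<subseteq> Sigma (snd ` T) (\<lambda>i. {..<Kvec X E j i}) \<and> card Q = b \<and> fst ` Q = snd ` T}"
  proof (rule Collect_cong)
    fix Q :: "(nat \<times> nat) set"
    have "Sigma (snd ` T) (\<lambda>i. {..<Kvec X E j i}) \<subseteq> Sigma {1..X j} (\<lambda>i. {..<Kvec X E j i})"
      using T by (intro Sigma_mono) (auto simp: gen_def)
    moreover have "Q \<subseteq> Sigma (fst ` Q) (\<lambda>i. {..<Kvec X E j i})"
      if "Q \<subseteq> Sigma {1..X j} (\<lambda>i. {..<Kvec X E j i})" using that by force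
    ultimately show "(Q \<subseteq> Sigma {1..X j} (\<lambda>i. {..<Kvec X E j i}) \<and> card Q = b \<and> fst ` Q = snd ` T)
      \<longleftrightarrow> (Q \<subseteq> Sigma (snd ` T) (\<lambda>i. {..<Kvec X E j i}) \<and> card Q = b \<and> fst ` Q = snd ` T)"
      by (metis subset_trans)
  qed
  finally show ?thesis unfolding cover_count_def gen_subsets_def by (simp add: conj_assoc)
qed

lemma fixation_if_single_ancestors:
  assumes X: "\<And>m. 0 < X m" and single: "\<And>n. \<exists>m>n. card (ancestors X E n (gen X m)) < 2"
  shows "fixation X E"
  unfolding fixation_def
proof
  fix n
  obtain m where m: "m > n" "card (ancestors X E n (gen X m)) < 2" using single by blast
  have "ancestors X E n (gen X m) \<noteq> {}" using ancestors_gen_nonempty[of n m] m X by simp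
  moreover have "finite (ancestors X E n (gen X m))" by (rule finite_subset[OF ancestors_subset]) simp
  ultimately have "card (ancestors X E n (gen X m)) > 0" by (simp add: card_gt_0_iff)
  then have "card (ancestors X E n (gen X m)) = 1" using m(2) by linarith
  then obtain u where u: "ancestors X E n (gen X m) = {u}" by (rule card_1_singletonE)
  have "desc X E m v = {}" if "v \<in> gen X n" "v \<noteq> u" for v
    using u that unfolding desc_def ancestors_def by blast
  moreover have "u \<in> gen X n" using u ancestors_subset by blast
  ultimately show "\<exists>m>n. \<exists>u\<in>gen X n. \<forall>v\<in>gen X n. v \<noteq> u \<longrightarrow> desc X E m v = {}"
    using m(1) by blast
qed

end

definition parent_freq :: "(nat \<Rightarrow> nat) \<Rightarrow> edge set \<Rightarrow> nat \<Rightarrow> nat \<Rightarrow> nat \<Rightarrow> real" where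
  "parent_freq X E j b b' = real (card {R \<in> gen_subsets X (Suc j) b. card (parents X E j R) = b'})
      / real (X (Suc j) choose b)"

context genealogy
begin

lemma card_parents_bounds:
  assumes "R \<in> gen_subsets X (Suc j) b" "1 \<le> b"
  shows "card (parents X E j R) \<in> {1..X j}" "card (parents X E j R) \<le> b"
proof -
  have R: "R \<subseteq> gen X (Suc j)" "card R = b" using assms(1) unfolding gen_subsets_def by auto
  then have "R \<noteq> {}" using assms(2) by auto
  then show "card (parents X E j R) \<in> {1..X j}"
    using card_parents_ge1[OF R(1)] card_mono[OF finite_gen parents_subset[of j R]] by simp
  show "card (parents X E j R) \<le> b" using card_parents_le[OF R(1)] R(2) by simp
qed

lemma parent_freq_le_1: "parent_freq X E j b b' \<le> 1"
proof -
  have "card {R \<in> gen_subsets X (Suc j) b. card (parents X E j R) = b'} \<le> card (gen_subsets X (Suc j) b)"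
    by (intro card_mono) auto
  then have "real (card {R \<in> gen_subsets X (Suc j) b. card (parents X E j R) = b'})
      \<le> real (X (Suc j) choose b)"
    by (simp add: card_gen_subsets)
  then show ?thesis unfolding parent_freq_def by (cases "X (Suc j) < b") (simp_all add: divide_le_eq_1)
qed

lemma parent_freq_eq_0:
  assumes "b < b'"
  shows "parent_freq X E j b b' = 0"
proof -
  have "card (parents X E j R) \<noteq> b'" if "R \<in> gen_subsets X (Suc j) b" for R
    using that card_parents_le[of R j] assms unfolding gen_subsets_def by auto
  then have "{R \<in> gen_subsets X (Suc j) b. card (parents X E j R) = b'} = {}" by blast
  then show ?thesis unfolding parent_freq_def by simp
qed

lemma sum_parent_freq_weighted:
  assumes b: "b \<in> {1..X (Suc j)}"
  shows "(\<Sum>b'\<in>{1..X j}. parent_freq X E j b b' * f b')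
    = (\<Sum>R\<in>gen_subsets X (Suc j) b. f (card (parents X E j R))) / real (X (Suc j) choose b)"
proof -
  have "(\<Sum>b'\<in>{1..X j}. real (card {R \<in> gen_subsets X (Suc j) b. card (parents X E j R) = b'}) * f b')
      = (\<Sum>R\<in>gen_subsets X (Suc j) b. f (card (parents X E j R)))"
    by (rule sum_by_fibres[OF finite_gen_subsets finite_atLeastAtMost]) (use card_parents_bounds b in auto)
  then show ?thesis unfolding parent_freq_def times_divide_eq_left sum_divide_distrib[symmetric] by simp
qed

lemma sum_parent_freq: "b \<in> {1..X (Suc j)} \<Longrightarrow> (\<Sum>b'\<in>{1..X j}. parent_freq X E j b b') = 1"
  using sum_parent_freq_weighted[of b j "\<lambda>_. 1"] by (simp add: card_gen_subsets)

lemma parent_freq_potential: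
  "b \<in> {1..X (Suc j)} \<Longrightarrow>
    (\<Sum>b'\<in>{1..X j}. parent_freq X E j b b' * potential b')
      \<le> potential b - (if 2 \<le> b then s_o X k j / 4 else 0)"
  using potential_parents_sum_le[of b j] sum_parent_freq_weighted[of b j potential]
  by (simp add: pos_divide_le_eq mult.commute)

end

section \<open>Random genealogies\<close>

lemma edge_space_sets_restrict:
  assumes "finite F"
  shows "{e. P ({x. e x} \<inter> F)} \<in> sets edge_space"
proof -
  define cyl where "cyl H = Pi\<^sub>E UNIV (\<lambda>x. if x \<in> F then {x \<in> H} else UNIV)" for H :: "edge set"
  have cyl_iff: "e \<in> cyl H \<longleftrightarrow> {x. e x} \<inter> F = H" if "H \<subseteq> F" for e H
    using that unfolding cyl_def by (auto simp: PiE_def Pi_def extensional_def)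
  have "{e. P ({x. e x} \<inter> F)} = (\<Union>H\<in>{H \<in> Pow F. P H}. cyl H)"
  proof (intro equalityI subsetI)
    fix e assume "e \<in> {e. P ({x. e x} \<inter> F)}"
    then show "e \<in> (\<Union>H\<in>{H \<in> Pow F. P H}. cyl H)" using cyl_iff[of "{x. e x} \<inter> F" e] by blast
  qed (use cyl_iff in auto)
  moreover have "cyl H \<in> sets edge_space" for H
    unfolding cyl_def edge_space_def by (rule sets_PiM_I_countable) auto
  ultimately show ?thesis using assms by (auto intro: sets.finite_UN)
qed

lemma (in prob_space) integral_sum_indicator:
  assumes "\<And>c. c \<in> V \<Longrightarrow> B c \<in> events"
  shows "(\<integral>\<omega>. (\<Sum>c\<in>V. c * indicator (B c) \<omega>) \<partial>M) = (\<Sum>c\<in>V. c * prob (B c))"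
  using assms
  by (subst Bochner_Integration.integral_sum)
    (auto simp: less_top[symmetric] Int_absorb2 sets.sets_into_space intro!: integrable_real_indicator)

lemma (in prob_space) indep_rv_integral:
  fixes h :: "'b \<Rightarrow> real" and Y :: "'a \<Rightarrow> 'b"
  assumes ind: "indep_rv M (count_space UNIV) Y Mb Z" and S: "S \<in> sets Mb"
    and V: "finite V" "\<And>\<omega>. \<omega> \<in> space M \<Longrightarrow> h (Y \<omega>) \<in> V"
  shows "(\<integral>\<omega>. h (Y \<omega>) * indicator (Z -` S \<inter> space M) \<omega> \<partial>M) = (\<integral>\<omega>. h (Y \<omega>) \<partial>M) * prob (Z -` S \<inter> space M)"
proof -
  define A where "A = Z -` S \<inter> space M"
  define Yc where "Yc c = Y -` {y. h y = c} \<inter> space M" for c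
  have isd: "indep_set {Y -` S \<inter> space M | S. S \<in> sets (count_space UNIV)}
      {Z -` S \<inter> space M | S. S \<in> sets Mb}"
    using ind unfolding indep_rv_def .
  have Yc: "Yc c \<in> {Y -` S \<inter> space M | S. S \<in> sets (count_space UNIV)}" for c
  proof -
    have "{y. h y = c} \<in> sets (count_space UNIV)" by simp
    then show ?thesis unfolding Yc_def by blast
  qed
  have A: "A \<in> {Z -` S \<inter> space M | S. S \<in> sets Mb}" unfolding A_def using S by blast
  have Yc_ev: "Yc c \<in> events" for c using indep_setD_ev1[OF isd] Yc by (rule subsetD)
  have A_ev: "A \<in> events" using indep_setD_ev2[OF isd] A by (rule subsetD)
  have YcA_ev: "Yc c \<inter> A \<in> events" for c using Yc_ev A_ev by (rule sets.Int)
  have dec: "h (Y \<omega>) = (\<Sum>c\<in>V. c * indicator (Yc c) \<omega>)" if "\<omega> \<in> space M" for \<omega>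
  proof -
    have "(\<Sum>c\<in>V. c * indicator (Yc c) \<omega>) = (\<Sum>c\<in>V. if c = h (Y \<omega>) then c else 0)"
      using that unfolding Yc_def by (intro sum.cong) (auto simp: indicator_def)
    then show ?thesis using V that by (simp add: sum.delta')
  qed
  have "(\<integral>\<omega>. h (Y \<omega>) * indicator A \<omega> \<partial>M) = (\<integral>\<omega>. (\<Sum>c\<in>V. c * indicator (Yc c \<inter> A) \<omega>) \<partial>M)"
    by (intro Bochner_Integration.integral_cong refl)
      (simp add: dec sum_distrib_right indicator_inter_arith mult.assoc)
  also have "\<dots> = (\<Sum>c\<in>V. c * prob (Yc c)) * prob A"
    unfolding integral_sum_indicator[OF YcA_ev] indep_setD[OF isd Yc A]
    by (simp add: sum_distrib_right mult.assoc)
  also have "(\<Sum>c\<in>V. c * prob (Yc c)) = (\<integral>\<omega>. h (Y \<omega>) \<partial>M)"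
    unfolding integral_sum_indicator[OF Yc_ev, symmetric]
    by (intro Bochner_Integration.integral_cong refl) (simp add: dec)
  finally show ?thesis unfolding A_def .
qed

locale genealogy_model = prob_space M
  for M :: "'w measure" +
  fixes X :: "nat \<Rightarrow> nat" and k :: "nat \<Rightarrow> nat \<Rightarrow> nat" and \<E> :: "'w \<Rightarrow> edge set"
  assumes X_pos: "\<And>n. 0 < X n"
    and edge_events: "\<And>e. {\<omega> \<in> space M. e \<in> \<E> \<omega>} \<in> sets M"
    and realisations: "\<And>\<omega>. \<omega> \<in> space M \<Longrightarrow> genealogy_edges X k (\<E> \<omega>)"
begin

lemma realisation_genealogy: "\<omega> \<in> space M \<Longrightarrow> genealogy X k (\<E> \<omega>)"
  unfolding genealogy_def by (rule realisations)

lemma edge_pattern_sets: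
  assumes "finite F"
  shows "{\<omega> \<in> space M. \<E> \<omega> \<inter> F = H} \<in> sets M"
proof (cases "H \<subseteq> F")
  case True
  have "{\<omega> \<in> space M. e \<in> \<E> \<omega> \<longleftrightarrow> e \<in> H} \<in> sets M" for e
    using edge_events[of e] sets.sets_Collect_neg[OF edge_events[of e]] by (cases "e \<in> H") simp_all
  then have "{\<omega> \<in> space M. \<forall>e\<in>F. e \<in> \<E> \<omega> \<longleftrightarrow> e \<in> H} \<in> sets M"
    using assms by (intro sets.sets_Collect_finite_All) auto
  moreover have "\<E> \<omega> \<inter> F = H \<longleftrightarrow> (\<forall>e\<in>F. e \<in> \<E> \<omega> \<longleftrightarrow> e \<in> H)" for \<omega>
    using True by blast
  ultimately show ?thesis by simp
next
  case False
  then have "{\<omega> \<in> space M. \<E> \<omega> \<inter> F = H} = {}" by blast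
  then show ?thesis by (simp only: sets.empty_sets)
qed

lemma measurable_finite_dep:
  assumes F: "finite F"
    and dep: "\<And>\<omega> \<omega>'. \<omega> \<in> space M \<Longrightarrow> \<omega>' \<in> space M \<Longrightarrow> \<E> \<omega> \<inter> F = \<E> \<omega>' \<inter> F \<Longrightarrow> f \<omega> = f \<omega>'"
    and N: "\<And>\<omega>. \<omega> \<in> space M \<Longrightarrow> f \<omega> \<in> space N"
  shows "f \<in> M \<rightarrow>\<^sub>M N"
proof (rule measurableI)
  fix A assume "A \<in> sets N"
  define I where "I = {\<E> \<omega> \<inter> F | \<omega>. \<omega> \<in> space M \<and> f \<omega> \<in> A}"
  have "f -` A \<inter> space M = (\<Union>H\<in>I. {\<omega> \<in> space M. \<E> \<omega> \<inter> F = H})"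
    unfolding I_def using dep by blast
  moreover have "finite I"
    by (rule finite_subset[of _ "Pow F"]) (use F in \<open>auto simp: I_def\<close>)
  ultimately show "f -` A \<inter> space M \<in> sets M"
    using edge_pattern_sets[OF F] by auto
qed (rule N)

lemma sets_finite_dep:
  assumes "finite F"
    and "\<And>\<omega> \<omega>'. \<omega> \<in> space M \<Longrightarrow> \<omega>' \<in> space M \<Longrightarrow> \<E> \<omega> \<inter> F = \<E> \<omega>' \<inter> F \<Longrightarrow> P \<omega> = P \<omega>'"
  shows "{\<omega> \<in> space M. P \<omega>} \<in> sets M"
proof -
  have "P \<in> M \<rightarrow>\<^sub>M count_space UNIV"
  proof (rule measurable_finite_dep[OF assms(1)])
    show "\<And>\<omega> \<omega>'. \<omega> \<in> space M \<Longrightarrow> \<omega>' \<in> space M \<Longrightarrow> \<E> \<omega> \<inter> F = \<E> \<omega>' \<inter> F \<Longrightarrow> P \<omega> = P \<omega>'"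
      using assms(2) by blast
  qed simp
  then have "P -` {True} \<inter> space M \<in> sets M" by (rule measurable_sets) simp
  moreover have "P -` {True} \<inter> space M = {\<omega> \<in> space M. P \<omega>}" by blast
  ultimately show ?thesis by simp
qed

lemma parents_eq_if_slots_eq:
  assumes "\<omega> \<in> space M" "\<omega>' \<in> space M" "\<E> \<omega> \<inter> slots X j = \<E> \<omega>' \<inter> slots X j"
  shows "parents X (\<E> \<omega>) j R = parents X (\<E> \<omega>') j R"
  using genealogy.parents_restrict[OF realisation_genealogy[OF assms(1)], of j R]
    genealogy.parents_restrict[OF realisation_genealogy[OF assms(2)], of j R] assms(3) by simp

definition parent_kernel :: "nat \<Rightarrow> nat \<Rightarrow> nat \<Rightarrow> real" where
  "parent_kernel j b b' = (\<integral>\<omega>. parent_freq X (\<E> \<omega>) j b b' \<partial>M)"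

lemma parent_freq_measurable: "(\<lambda>\<omega>. parent_freq X (\<E> \<omega>) j b b') \<in> borel_measurable M"
proof (rule measurable_finite_dep[of "slots X j"])
  fix \<omega> \<omega>' assume w: "\<omega> \<in> space M" "\<omega>' \<in> space M" "\<E> \<omega> \<inter> slots X j = \<E> \<omega>' \<inter> slots X j"
  have "parents X (\<E> \<omega>) j R = parents X (\<E> \<omega>') j R" for R
    using parents_eq_if_slots_eq[OF w] .
  then show "parent_freq X (\<E> \<omega>) j b b' = parent_freq X (\<E> \<omega>') j b b'" unfolding parent_freq_def by simp
qed simp_all

lemma integrable_parent_freq: "integrable M (\<lambda>\<omega>. parent_freq X (\<E> \<omega>) j b b')"
proof (rule integrable_const_bound[where B = 1])
  show "AE \<omega> in M. norm (parent_freq X (\<E> \<omega>) j b b') \<le> 1"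
    using genealogy.parent_freq_le_1[OF realisation_genealogy] by (intro AE_I2) (simp add: parent_freq_def)
qed (rule parent_freq_measurable)

lemma parent_kernel_nonneg: "0 \<le> parent_kernel j b b'"
  unfolding parent_kernel_def parent_freq_def by simp

lemma parent_kernel_eq_0: "b < b' \<Longrightarrow> parent_kernel j b b' = 0"
  unfolding parent_kernel_def
  using genealogy.parent_freq_eq_0[OF realisation_genealogy]
    by (simp cong: Bochner_Integration.integral_cong)

lemma sum_parent_kernel_weighted:
  "(\<Sum>b'\<in>{1..X j}. parent_kernel j b b' * f b') = (\<integral>\<omega>. (\<Sum>b'\<in>{1..X j}. parent_freq X (\<E> \<omega>) j b b' * f b') \<partial>M)"
  unfolding parent_kernel_def
  by (subst Bochner_Integration.integral_sum) (auto intro: integrable_parent_freq)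

lemma sum_parent_kernel: "b \<in> {1..X (Suc j)} \<Longrightarrow> (\<Sum>b'\<in>{1..X j}. parent_kernel j b b') = 1"
  using sum_parent_kernel_weighted[of j b "\<lambda>_. 1"] genealogy.sum_parent_freq[OF realisation_genealogy]
  by (simp add: prob_space cong: Bochner_Integration.integral_cong)

lemma parent_kernel_potential:
  assumes b: "b \<in> {1..X (Suc j)}"
  shows "(\<Sum>b'\<in>{1..X j}. parent_kernel j b b' * potential b') \<le> potential b
      - (if 2 \<le> b then s_o X k j / 4 else 0)"
proof -
  have "(\<integral>\<omega>. (\<Sum>b'\<in>{1..X j}. parent_freq X (\<E> \<omega>) j b b' * potential b') \<partial>M)
      \<le> (\<integral>\<omega>. potential b - (if 2 \<le> b then s_o X k j / 4 else 0) \<partial>M)"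
    using genealogy.parent_freq_potential[OF realisation_genealogy b]
    by (intro integral_mono) (auto intro!: Bochner_Integration.integrable_sum integrable_mult_left
      integrable_parent_freq)
  then show ?thesis unfolding sum_parent_kernel_weighted by (simp add: prob_space)
qed

definition anc_card_kernel :: "nat \<Rightarrow> nat \<Rightarrow> nat \<Rightarrow> real" where
  "anc_card_kernel n m a = kernel_iter (\<lambda>d. X (n + d)) (\<lambda>d. parent_kernel (n + d)) (m - n) (X m) a"

definition anc_card_event :: "nat \<Rightarrow> vertex set \<Rightarrow> nat \<Rightarrow> 'w set" where
  "anc_card_event n T a = {\<omega> \<in> space M. card (ancestors X (\<E> \<omega>) n T) = a}"

lemma anc_card_event_Int_space[simp]: "anc_card_event n T a \<inter> space M = anc_card_event n T a"
  unfolding anc_card_event_def by blast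

lemma anc_card_event_sets:
  assumes "T \<subseteq> gen X J"
  shows "anc_card_event n T a \<in> sets M"
  unfolding anc_card_event_def
proof (rule sets_finite_dep[of "\<Union>l\<in>{n..<J}. slots X l"])
  fix \<omega> \<omega>' assume w: "\<omega> \<in> space M" "\<omega>' \<in> space M"
    "\<E> \<omega> \<inter> (\<Union>l\<in>{n..<J}. slots X l) = \<E> \<omega>' \<inter> (\<Union>l\<in>{n..<J}. slots X l)"
  show "(card (ancestors X (\<E> \<omega>) n T) = a) = (card (ancestors X (\<E> \<omega>') n T) = a)"
    unfolding genealogy.ancestors_restrict[OF realisation_genealogy[OF w(1)] assms]
      genealogy.ancestors_restrict[OF realisation_genealogy[OF w(2)] assms] w(3) ..
qed simp

lemma Kvec_measurable: "(\<lambda>\<omega>. Kvec X (\<E> \<omega>) j) \<in> M \<rightarrow>\<^sub>M count_space UNIV"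
proof (rule measurable_finite_dep[of "slots X j"])
  fix \<omega> \<omega>' assume w: "\<omega> \<in> space M" "\<omega>' \<in> space M" "\<E> \<omega> \<inter> slots X j = \<E> \<omega>' \<inter> slots X j"
  show "Kvec X (\<E> \<omega>) j = Kvec X (\<E> \<omega>') j"
    unfolding genealogy.Kvec_restrict[OF realisation_genealogy[OF w(1)]]
      genealogy.Kvec_restrict[OF realisation_genealogy[OF w(2)]] w(3) ..
qed simp_all

lemma sibpart_measurable: "(\<lambda>\<omega>. sibpart X (\<E> \<omega>) j) \<in> M \<rightarrow>\<^sub>M count_space UNIV"
proof (rule measurable_finite_dep[of "slots X j"])
  fix \<omega> \<omega>' assume w: "\<omega> \<in> space M" "\<omega>' \<in> space M" "\<E> \<omega> \<inter> slots X j = \<E> \<omega>' \<inter> slots X j"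
  show "sibpart X (\<E> \<omega>) j = sibpart X (\<E> \<omega>') j"
    unfolding genealogy.sibpart_restrict[OF realisation_genealogy[OF w(1)]]
      genealogy.sibpart_restrict[OF realisation_genealogy[OF w(2)]] w(3) ..
qed simp_all

definition preimage_count :: "nat \<Rightarrow> nat \<Rightarrow> vertex set \<Rightarrow> 'w \<Rightarrow> nat" where
  "preimage_count j b T \<omega> = card {R \<in> gen_subsets X (Suc j) b. parents X (\<E> \<omega>) j R = T}"

lemma preimage_count_measurable: "(\<lambda>\<omega>. real (preimage_count j b T \<omega>)) \<in> borel_measurable M"
proof (rule measurable_finite_dep[of "slots X j"])
  fix \<omega> \<omega>' assume w: "\<omega> \<in> space M" "\<omega>' \<in> space M" "\<E> \<omega> \<inter> slots X j = \<E> \<omega>' \<inter> slots X j"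
  have "parents X (\<E> \<omega>) j R = parents X (\<E> \<omega>') j R" for R
    using parents_eq_if_slots_eq[OF w] .
  then show "real (preimage_count j b T \<omega>) = real (preimage_count j b T \<omega>')"
    unfolding preimage_count_def by simp
qed simp_all

lemma preimage_count_le: "preimage_count j b T \<omega> \<le> card (gen_subsets X (Suc j) b)"
  unfolding preimage_count_def by (rule card_mono) auto

lemma integrable_preimage_count: "integrable M (\<lambda>\<omega>. real (preimage_count j b T \<omega>))"
proof (rule integrable_const_bound[where B = "real (card (gen_subsets X (Suc j) b))"])
  show "AE \<omega> in M. norm (real (preimage_count j b T \<omega>)) \<le> real (card (gen_subsets X (Suc j) b))"
    using preimage_count_le by (intro AE_I2) simp
qed (rule preimage_count_measurable)

lemma preimage_count_empty: assumes "1 \<le> b" "\<omega> \<in> space M" shows "preimage_count j b {} \<omega> = 0"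
proof -
  have "{R \<in> gen_subsets X (Suc j) b. parents X (\<E> \<omega>) j R = {}} = {}"
  proof (rule ccontr)
    assume "{R \<in> gen_subsets X (Suc j) b. parents X (\<E> \<omega>) j R = {}} \<noteq> {}"
    then obtain R where R: "R \<subseteq> gen X (Suc j)" "card R = b" "parents X (\<E> \<omega>) j R = {}"
      unfolding gen_subsets_def by blast
    then have "R \<noteq> {}" using assms by auto
    then show False using genealogy.parents_nonempty[OF realisation_genealogy[OF assms(2)] R(1)] R(3)
      by blast
  qed
  then show ?thesis unfolding preimage_count_def by simp
qed

lemma sum_preimage_count:
  assumes "\<omega> \<in> space M"
  shows "(\<Sum>T\<in>gen_subsets X j b'. preimage_count j b T \<omega>)
      = card {R \<in> gen_subsets X (Suc j) b. card (parents X (\<E> \<omega>) j R) = b'}"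
proof -
  define S' where "S' = {R \<in> gen_subsets X (Suc j) b. card (parents X (\<E> \<omega>) j R) = b'}"
  have fS': "finite S'" unfolding S'_def by simp
  have rng: "(\<lambda>R. parents X (\<E> \<omega>) j R) ` S' \<subseteq> gen_subsets X j b'"
    using genealogy.parents_subset[OF realisation_genealogy[OF assms]]
    unfolding S'_def gen_subsets_def by blast
  have "(\<Sum>T\<in>gen_subsets X j b'. card {R \<in> S'. parents X (\<E> \<omega>) j R = T}) = card S'"
    by (rule card_by_fibres[OF fS' _ rng]) simp
  moreover have "{R \<in> S'. parents X (\<E> \<omega>) j R = T} = {R \<in> gen_subsets X (Suc j) b. parents X (\<E> \<omega>) j R = T}"
    if "T \<in> gen_subsets X j b'" for T
    using that unfolding S'_def gen_subsets_def by auto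
  ultimately show ?thesis unfolding preimage_count_def S'_def by simp
qed

lemma preimage_count_eq_cover_count:
  assumes "\<omega> \<in> space M" "T \<subseteq> gen X j"
  shows "preimage_count j b T \<omega> = cover_count b (Kvec X (\<E> \<omega>) j) (snd ` T)"
  unfolding preimage_count_def
  using genealogy.card_parent_preimage[OF realisation_genealogy[OF assms(1)] assms(2)] .

lemma sum_indicator_anc_card_event:
  assumes n: "n \<le> j" and \<omega>: "\<omega> \<in> space M"
  shows "(\<Sum>R\<in>gen_subsets X (Suc j) b. indicator (anc_card_event n R a) \<omega>)
    = (\<Sum>T\<in>Pow (gen X j). real (preimage_count j b T \<omega>) * indicator (anc_card_event n T a) \<omega> :: real)"
proof -
  interpret genealogy X k "\<E> \<omega>" using realisation_genealogy[OF \<omega>] .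
  define h where "h T = (indicator (anc_card_event n T a) \<omega> :: real)" for T
  have "indicator (anc_card_event n R a) \<omega> = h (parents X (\<E> \<omega>) j R)" if "R \<in> gen_subsets X (Suc j) b" for R
    using \<omega> ancestors_parents[OF _ n, of R] that
    unfolding anc_card_event_def h_def gen_subsets_def by (simp add: indicator_def)
  then have "(\<Sum>R\<in>gen_subsets X (Suc j) b. indicator (anc_card_event n R a) \<omega>)
      = (\<Sum>R\<in>gen_subsets X (Suc j) b. h (parents X (\<E> \<omega>) j R))"
    by (rule sum.cong[OF refl])
  also have "\<dots> = (\<Sum>T\<in>Pow (gen X j). real (preimage_count j b T \<omega>) * h T)"
    unfolding preimage_count_def
    by (rule sum_by_fibres[symmetric, OF finite_gen_subsets]) (use parents_subset in auto)
  finally show ?thesis unfolding h_def .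
qed

lemma sum_expected_preimage_count:
  assumes b: "b \<in> {1..X (Suc j)}"
  shows "(\<Sum>T\<in>gen_subsets X j b'. \<integral>\<omega>. real (preimage_count j b T \<omega>) \<partial>M)
    = real (X (Suc j) choose b) * parent_kernel j b b'"
proof -
  have C: "real (X (Suc j) choose b) > 0" using b by simp
  have "(\<Sum>T\<in>gen_subsets X j b'. \<integral>\<omega>. real (preimage_count j b T \<omega>) \<partial>M)
      = (\<integral>\<omega>. real (\<Sum>T\<in>gen_subsets X j b'. preimage_count j b T \<omega>) \<partial>M)"
    unfolding of_nat_sum by (rule Bochner_Integration.integral_sum[symmetric])
      (rule integrable_preimage_count)
  also have "\<dots> = (\<integral>\<omega>. real (X (Suc j) choose b) * parent_freq X (\<E> \<omega>) j b b' \<partial>M)"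
    using C by (intro Bochner_Integration.integral_cong) (simp_all add: sum_preimage_count parent_freq_def)
  finally show ?thesis unfolding parent_kernel_def by simp
qed

definition avg_anc_card_prob :: "nat \<Rightarrow> nat \<Rightarrow> nat \<Rightarrow> nat \<Rightarrow> real" where
  "avg_anc_card_prob n j b a = (\<Sum>T\<in>gen_subsets X j b. prob (anc_card_event n T a)) / real (X j choose b)"

definition anc_set_event :: "nat \<Rightarrow> nat \<Rightarrow> vertex set \<Rightarrow> 'w set" where
  "anc_set_event m J S = {\<omega> \<in> space M. ancestors X (\<E> \<omega>) J (gen X m) = S}"

definition parents_card_event :: "nat \<Rightarrow> vertex set \<Rightarrow> nat \<Rightarrow> 'w set" where
  "parents_card_event j S a = {\<omega> \<in> space M. card (parents X (\<E> \<omega>) j S) = a}"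

lemma parents_card_event_sets: "parents_card_event j S a \<in> sets M"
  unfolding parents_card_event_def
proof (rule sets_finite_dep[of "slots X j"])
  fix \<omega> \<omega>' assume w: "\<omega> \<in> space M" "\<omega>' \<in> space M" "\<E> \<omega> \<inter> slots X j = \<E> \<omega>' \<inter> slots X j"
  show "(card (parents X (\<E> \<omega>) j S) = a) = (card (parents X (\<E> \<omega>') j S) = a)"
    using parents_eq_if_slots_eq[OF w] by simp
qed simp

lemma parents_card_event_Int_space[simp]: "parents_card_event j S a \<inter> space M = parents_card_event j S a"
  unfolding parents_card_event_def by blast

lemma parent_kernel_eq_mean_prob:
  "parent_kernel j b a
    = (\<Sum>S\<in>gen_subsets X (Suc j) b. prob (parents_card_event j S a)) / real (X (Suc j) choose b)"
proof -
  have "parent_kernel j b a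
      = (\<integral>\<omega>. (\<Sum>S\<in>gen_subsets X (Suc j) b. indicator (parents_card_event j S a) \<omega>) /
        real (X (Suc j) choose b) \<partial>M)"
    unfolding parent_kernel_def parent_freq_def
    by (intro Bochner_Integration.integral_cong)
      (simp_all add: indicator_def parents_card_event_def Int_def)
  also have "\<dots> = (\<Sum>S\<in>gen_subsets X (Suc j) b. prob (parents_card_event j S a)) / real (X (Suc j) choose b)"
    unfolding Bochner_Integration.integral_divide_zero
    by (subst Bochner_Integration.integral_sum)
      (auto simp: less_top[symmetric] intro!: integrable_real_indicator parents_card_event_sets)
  finally show ?thesis .
qed

lemma anc_card_event_step:
  assumes "j < m"
  shows "anc_card_event j (gen X m) a
    = (\<Union>S\<in>Pow (gen X (Suc j)). anc_set_event m (Suc j) S \<inter> parents_card_event j S a)"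
proof -
  have "ancestors X (\<E> \<omega>) j (gen X m) = parents X (\<E> \<omega>) j (ancestors X (\<E> \<omega>) (Suc j) (gen X m))"
    "ancestors X (\<E> \<omega>) (Suc j) (gen X m) \<subseteq> gen X (Suc j)" if "\<omega> \<in> space M" for \<omega>
    using genealogy.ancestors_step[OF realisation_genealogy[OF that] assms]
      genealogy.ancestors_subset[OF realisation_genealogy[OF that]] by auto
  then show ?thesis
    unfolding anc_card_event_def anc_set_event_def parents_card_event_def by auto
qed

lemma anc_set_event_sets:
  assumes "Suc j \<le> m"
  shows "anc_set_event m (Suc j) S \<in> sets M"
  unfolding anc_set_event_def
proof (rule sets_finite_dep[of "\<Union>l\<in>{Suc j..<m}. slots X l"])
  fix \<omega> \<omega>' assume w: "\<omega> \<in> space M" "\<omega>' \<in> space M"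
    "\<E> \<omega> \<inter> (\<Union>l\<in>{Suc j..<m}. slots X l) = \<E> \<omega>' \<inter> (\<Union>l\<in>{Suc j..<m}. slots X l)"
  show "(ancestors X (\<E> \<omega>) (Suc j) (gen X m) = S) = (ancestors X (\<E> \<omega>') (Suc j) (gen X m) = S)"
    unfolding genealogy.ancestors_restrict[OF realisation_genealogy[OF w(1)] subset_refl]
      genealogy.ancestors_restrict[OF realisation_genealogy[OF w(2)] subset_refl] w(3) ..
qed simp

lemma anc_set_event_disjoint: "disjoint_family_on (\<lambda>S. anc_set_event m J S \<inter> P S) A"
  unfolding disjoint_family_on_def anc_set_event_def by auto

lemma anc_card_event_edges_before:
  assumes T: "T \<subseteq> gen X j"
  shows "anc_card_event n T a = (\<lambda>\<omega>. edges_before X (\<E> \<omega>) j)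
    -` {e. card (ancestors X ({x. e x} \<inter> (\<Union>l\<in>{n..<j}. slots X l)) n T) = a} \<inter> space M"
proof -
  have "{x. edges_before X (\<E> \<omega>) j x} \<inter> (\<Union>l\<in>{n..<j}. slots X l) = \<E> \<omega> \<inter> (\<Union>l\<in>{n..<j}. slots X l)" for \<omega>
    unfolding edges_before_def by auto
  then show ?thesis
    unfolding anc_card_event_def using genealogy.ancestors_restrict[OF realisation_genealogy T] by auto
qed

lemma anc_set_event_edges_after:
  "anc_set_event m (Suc j) S = (\<lambda>\<omega>. edges_after X (\<E> \<omega>) j)
    -` {e. ancestors X ({x. e x} \<inter> (\<Union>l\<in>{Suc j..<m}. slots X l)) (Suc j) (gen X m) = S} \<inter> space M"
proof -
  have "{x. edges_after X (\<E> \<omega>) j x} \<inter> (\<Union>l\<in>{Suc j..<m}. slots X l)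
      = \<E> \<omega> \<inter> (\<Union>l\<in>{Suc j..<m}. slots X l)" for \<omega>
    unfolding edges_after_def by auto
  then show ?thesis
    unfolding anc_set_event_def using genealogy.ancestors_restrict[OF realisation_genealogy
      subset_refl] by auto
qed

lemma anc_card_event_eq_Union:
  "anc_card_event J (gen X m) b = (\<Union>S\<in>gen_subsets X J b. anc_set_event m J S)"
proof
  show "anc_card_event J (gen X m) b \<subseteq> (\<Union>S\<in>gen_subsets X J b. anc_set_event m J S)"
  proof
    fix \<omega> assume "\<omega> \<in> anc_card_event J (gen X m) b"
    then have w: "\<omega> \<in> space M" "card (ancestors X (\<E> \<omega>) J (gen X m)) = b" unfolding anc_card_event_def
      by auto
    have "ancestors X (\<E> \<omega>) J (gen X m) \<in> gen_subsets X J b"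
      unfolding gen_subsets_def using w genealogy.ancestors_subset[OF realisation_genealogy[OF w(1)]]
        by blast
    moreover have "\<omega> \<in> anc_set_event m J (ancestors X (\<E> \<omega>) J (gen X m))" unfolding anc_set_event_def
      using w by blast
    ultimately show "\<omega> \<in> (\<Union>S\<in>gen_subsets X J b. anc_set_event m J S)" by blast
  qed
  show "(\<Union>S\<in>gen_subsets X J b. anc_set_event m J S) \<subseteq> anc_card_event J (gen X m) b"
    unfolding anc_card_event_def anc_set_event_def gen_subsets_def by auto
qed

lemma prob_anc_card_event_eq_sum:
  assumes m: "Suc j \<le> m"
  shows "prob (anc_card_event (Suc j) (gen X m) b)
      = (\<Sum>S\<in>gen_subsets X (Suc j) b. prob (anc_set_event m (Suc j) S))"
  unfolding anc_card_event_eq_Union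
proof (rule finite_measure_finite_Union)
  show "anc_set_event m (Suc j) ` gen_subsets X (Suc j) b \<subseteq> events" using anc_set_event_sets[OF m] by blast
  show "disjoint_family_on (anc_set_event m (Suc j)) (gen_subsets X (Suc j) b)"
    unfolding disjoint_family_on_def anc_set_event_def by blast
qed simp

definition ge2_event :: "nat \<Rightarrow> nat \<Rightarrow> 'w set" where
  "ge2_event n m = {\<omega> \<in> space M. 2 \<le> card (ancestors X (\<E> \<omega>) n (gen X m))}"

lemma ge2_event_eq_Union: "ge2_event n m = (\<Union>a\<in>{2..X n}. anc_card_event n (gen X m) a)"
proof -
  have "card (ancestors X (\<E> \<omega>) n (gen X m)) \<le> X n" if "\<omega> \<in> space M" for \<omega>
    using card_mono[OF finite_gen genealogy.ancestors_subset[OF realisation_genealogy[OF that]]] by simp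
  then show ?thesis unfolding ge2_event_def anc_card_event_def by auto
qed

lemma ge2_event_sets: "ge2_event n m \<in> sets M"
  unfolding ge2_event_eq_Union by (intro sets.finite_UN) (auto intro: anc_card_event_sets)

lemma prob_ge2_event: "prob (ge2_event n m) = (\<Sum>a\<in>{2..X n}. prob (anc_card_event n (gen X m) a))"
  unfolding ge2_event_eq_Union
proof (rule finite_measure_finite_Union)
  show "anc_card_event n (gen X m) ` {2..X n} \<subseteq> events" using anc_card_event_sets[of "gen X m" m] by blast
  show "disjoint_family_on (anc_card_event n (gen X m)) {2..X n}"
    unfolding disjoint_family_on_def anc_card_event_def by blast
qed simp

lemma potential_chain_parent_kernel:
  "potential_chain (\<lambda>d. X (n + d)) (\<lambda>d. parent_kernel (n + d)) (\<lambda>d. s_o X k (n + d))"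
proof
  fix d b assume "b \<in> {1..X (n + Suc d)}"
  then have b: "b \<in> {1..X (Suc (n + d))}" by simp
  show "(\<Sum>b'\<in>{1..X (n + d)}. parent_kernel (n + d) b b') = 1" by (rule sum_parent_kernel[OF b])
  show "(\<Sum>b'\<in>{1..X (n + d)}. parent_kernel (n + d) b b' * potential b')
    \<le> potential b - (if 2 \<le> b then s_o X k (n + d) / 4 else 0)"
    by (rule parent_kernel_potential[OF b])
qed (auto intro: parent_kernel_nonneg parent_kernel_eq_0 s_o_nonneg)

lemma prob_ge2_event_bound:
  assumes kernel: "\<And>n m a. n \<le> m \<Longrightarrow> a \<in> {1..X n} \<Longrightarrow> prob (anc_card_event n (gen X m) a)
      = anc_card_kernel n m a"
    and nm: "n \<le> m"
  shows "(t_o X k m - t_o X k n) * prob (ge2_event n m) \<le> 4"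
proof -
  interpret potential_chain "\<lambda>d. X (n + d)" "\<lambda>d. parent_kernel (n + d)" "\<lambda>d. s_o X k (n + d)"
    by (rule potential_chain_parent_kernel)
  have "prob (ge2_event n m) = (\<Sum>a\<in>{2..X n}. kernel_iter (\<lambda>d. X (n + d)) (\<lambda>d. parent_kernel (n + d))
      (m - n) (X m) a)"
    unfolding prob_ge2_event using kernel[OF nm] by (simp add: anc_card_kernel_def)
  moreover have "t_o X k m - t_o X k n = (\<Sum>l<m - n. s_o X k (n + l))"
    using t_o_diff[of X k n "m - n"] nm by simp
  ultimately show ?thesis using ge2_mass_bound[of "X m" "m - n"] nm X_pos[of m] by simp
qed

lemma fixation_AE:
  assumes kernel: "\<And>n m a. n \<le> m \<Longrightarrow> a \<in> {1..X n} \<Longrightarrow> prob (anc_card_event n (gen X m) a)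
      = anc_card_kernel n m a"
    and lim: "filterlim (t_o X k) at_top sequentially"
  shows "AE \<omega> in M. fixation X (\<E> \<omega>)"
proof (rule AE_I')
  define N where "N n = (\<Inter>m\<in>{Suc n..}. ge2_event n m)" for n
  have "N n \<in> null_sets M" for n
  proof -
    have N: "N n \<in> sets M" unfolding N_def by (intro sets.countable_INT') (auto intro: ge2_event_sets)
    have "prob (N n) \<le> 0 + e" if e: "e > 0" for e
    proof -
      obtain m0 where m0: "\<And>m. m \<ge> m0 \<Longrightarrow> t_o X k n + 4 / e \<le> t_o X k m"
        using lim unfolding filterlim_at_top eventually_sequentially by blast
      define m where "m = max m0 (Suc n)"
      have m: "Suc n \<le> m" "4 / e \<le> t_o X k m - t_o X k n" using m0[of m] unfolding m_def by auto
      have "0 < 4 / e" using e by simp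
      then have \<Delta>: "0 < t_o X k m - t_o X k n" using m(2) by linarith
      have "prob (N n) \<le> prob (ge2_event n m)"
        using m(1) ge2_event_sets by (intro finite_measure_mono) (auto simp: N_def)
      also have "\<dots> \<le> 4 / (t_o X k m - t_o X k n)"
        using prob_ge2_event_bound[OF kernel, of n m] m(1) \<Delta> by (simp add: pos_le_divide_eq mult.commute)
      also have "\<dots> \<le> 4 / (4 / e)" using m(2) e \<Delta> by (intro divide_left_mono) auto
      finally show ?thesis using e by simp
    qed
    then have "prob (N n) = 0" using measure_nonneg[of M "N n"] field_le_epsilon by (metis order.antisym)
    then show ?thesis using N by (simp add: null_sets_def emeasure_eq_measure)
  qed
  then show "(\<Union>n. N n) \<in> null_sets M" by blast
  show "{\<omega> \<in> space M. \<not> fixation X (\<E> \<omega>)} \<subseteq> (\<Union>n. N n)"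
  proof
    fix \<omega> assume \<omega>: "\<omega> \<in> {\<omega> \<in> space M. \<not> fixation X (\<E> \<omega>)}"
    then have "\<not> (\<forall>n. \<exists>m>n. card (ancestors X (\<E> \<omega>) n (gen X m)) < 2)"
      using genealogy.fixation_if_single_ancestors[OF realisation_genealogy X_pos] by blast
    then obtain n where "\<not> (\<exists>m>n. card (ancestors X (\<E> \<omega>) n (gen X m)) < 2)" by blast
    then have "\<forall>m>n. 2 \<le> card (ancestors X (\<E> \<omega>) n (gen X m))" by (meson not_less)
    then have "\<omega> \<in> N n" using \<omega> by (auto simp: N_def ge2_event_def Suc_le_eq)
    then show "\<omega> \<in> (\<Union>n. N n)" by blast
  qed
qed

end

section \<open>Forward neutral models\<close>

locale forward_model = genealogy_model +
  assumes forward: "forward_neutral M X \<E>"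
begin

lemma Kvec_exchangeable:
  "\<pi> permutes {1..X n} \<Longrightarrow>
    distr M (count_space UNIV) (\<lambda>\<omega>. Kvec X (\<E> \<omega>) n \<circ> \<pi>) = distr M (count_space UNIV) (\<lambda>\<omega>. Kvec X (\<E> \<omega>) n)"
  using forward unfolding forward_neutral_def by blast

lemma Kvec_indep_before:
  "indep_rv M (count_space UNIV) (\<lambda>\<omega>. Kvec X (\<E> \<omega>) n) edge_space (\<lambda>\<omega>. edges_before X (\<E> \<omega>) n)"
  using forward unfolding forward_neutral_def by blast

lemma cover_count_exchangeable:
  assumes I: "I \<subseteq> {1..X j}" "I' \<subseteq> {1..X j}" "card I = card I'"
  shows "(\<integral>\<omega>. real (cover_count b (Kvec X (\<E> \<omega>) j) I) \<partial>M)
      = (\<integral>\<omega>. real (cover_count b (Kvec X (\<E> \<omega>) j) I') \<partial>M)"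
proof -
  obtain \<pi> where \<pi>: "\<pi> permutes {1..X j}" "\<pi> ` I = I'" using exists_permutes_image[OF _ I] by auto
  have bij: "bij \<pi>" using \<pi>(1) by (rule permutes_bij)
  define f where "f \<kappa> = real (cover_count b \<kappa> I)" for \<kappa>
  have fm: "f \<in> borel_measurable (count_space UNIV)" by simp
  have m\<pi>: "(\<lambda>\<omega>. Kvec X (\<E> \<omega>) j \<circ> \<pi>) \<in> M \<rightarrow>\<^sub>M count_space UNIV"
    using measurable_compose[OF Kvec_measurable[of j], of "\<lambda>\<kappa>. \<kappa> \<circ> \<pi>" "count_space UNIV"] by simp
  have "(\<integral>\<omega>. real (cover_count b (Kvec X (\<E> \<omega>) j) I') \<partial>M) = (\<integral>\<omega>. f (Kvec X (\<E> \<omega>) j \<circ> \<pi>) \<partial>M)"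
    unfolding f_def cover_count_permute[OF bij] \<pi>(2) ..
  also have "\<dots> = (\<integral>\<kappa>. f \<kappa> \<partial>distr M (count_space UNIV) (\<lambda>\<omega>. Kvec X (\<E> \<omega>) j \<circ> \<pi>))"
    by (rule integral_distr[OF m\<pi> fm, symmetric])
  also have "\<dots> = (\<integral>\<kappa>. f \<kappa> \<partial>distr M (count_space UNIV) (\<lambda>\<omega>. Kvec X (\<E> \<omega>) j))"
    unfolding Kvec_exchangeable[OF \<pi>(1)] ..
  also have "\<dots> = (\<integral>\<omega>. f (Kvec X (\<E> \<omega>) j) \<partial>M)"
    by (rule integral_distr[OF Kvec_measurable fm])
  finally show ?thesis unfolding f_def by simp
qed

lemma preimage_count_exchangeable:
  assumes T: "T \<in> gen_subsets X j b'" "T' \<in> gen_subsets X j b'"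
  shows "(\<integral>\<omega>. real (preimage_count j b T \<omega>) \<partial>M) = (\<integral>\<omega>. real (preimage_count j b T' \<omega>) \<partial>M)"
proof -
  have Ts: "T \<subseteq> gen X j" "T' \<subseteq> gen X j" "card T = b'" "card T' = b'" using T unfolding gen_subsets_def
    by auto
  have snd_inj: "inj_on snd (gen X j)" by (rule inj_onI) (auto simp: gen_def)
  have c: "card (snd ` T) = card (snd ` T')"
    using card_image[OF inj_on_subset[OF snd_inj Ts(1)]]
      card_image[OF inj_on_subset[OF snd_inj Ts(2)]] Ts by simp
  have sub: "snd ` T \<subseteq> {1..X j}" "snd ` T' \<subseteq> {1..X j}" using Ts(1,2) by (auto simp: gen_def)
  have "(\<integral>\<omega>. real (preimage_count j b T \<omega>) \<partial>M) = (\<integral>\<omega>. real (cover_count b (Kvec X (\<E> \<omega>) j) (snd ` T)) \<partial>M)"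
    using preimage_count_eq_cover_count[OF _ Ts(1)] by (intro Bochner_Integration.integral_cong) auto
  also have "\<dots> = (\<integral>\<omega>. real (cover_count b (Kvec X (\<E> \<omega>) j) (snd ` T')) \<partial>M)"
    by (rule cover_count_exchangeable[OF sub c])
  also have "\<dots> = (\<integral>\<omega>. real (preimage_count j b T' \<omega>) \<partial>M)"
    using preimage_count_eq_cover_count[OF _ Ts(2)] by (intro Bochner_Integration.integral_cong) auto
  finally show ?thesis .
qed

lemma preimage_count_indep:
  assumes T: "T \<subseteq> gen X j"
  shows "(\<integral>\<omega>. real (preimage_count j b T \<omega>) * indicator (anc_card_event n T a) \<omega> \<partial>M)
    = (\<integral>\<omega>. real (preimage_count j b T \<omega>) \<partial>M) * prob (anc_card_event n T a)"
proof -
  define C where "C = {e. card (ancestors X ({x. e x} \<inter> (\<Union>l\<in>{n..<j}. slots X l)) n T) = a}"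
  have C: "C \<in> sets edge_space" unfolding C_def by (rule edge_space_sets_restrict) simp
  define h where "h \<kappa> = real (cover_count b \<kappa> (snd ` T))" for \<kappa>
  have count: "real (preimage_count j b T \<omega>) = h (Kvec X (\<E> \<omega>) j)" if "\<omega> \<in> space M" for \<omega>
    using preimage_count_eq_cover_count[OF that T] unfolding h_def by simp
  have range: "h (Kvec X (\<E> \<omega>) j) \<in> real ` {0..card (gen_subsets X (Suc j) b)}" if "\<omega> \<in> space M" for \<omega>
    using count[OF that] preimage_count_le[of j b T \<omega>]
      by (intro image_eqI[of _ real "preimage_count j b T \<omega>"]) auto
  have "(\<integral>\<omega>. h (Kvec X (\<E> \<omega>) j) * indicator (anc_card_event n T a) \<omega> \<partial>M)
      = (\<integral>\<omega>. h (Kvec X (\<E> \<omega>) j) \<partial>M) * prob (anc_card_event n T a)"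
    unfolding anc_card_event_edges_before[OF T] C_def[symmetric]
    by (rule indep_rv_integral[where h = h and Y = "\<lambda>\<omega>. Kvec X (\<E> \<omega>) j", OF Kvec_indep_before C _ range])
      simp
  moreover have "(\<integral>\<omega>. real (preimage_count j b T \<omega>) * indicator (anc_card_event n T a) \<omega> \<partial>M)
      = (\<integral>\<omega>. h (Kvec X (\<E> \<omega>) j) * indicator (anc_card_event n T a) \<omega> \<partial>M)"
    "(\<integral>\<omega>. real (preimage_count j b T \<omega>) \<partial>M) = (\<integral>\<omega>. h (Kvec X (\<E> \<omega>) j) \<partial>M)"
    using count by (auto intro: Bochner_Integration.integral_cong)
  ultimately show ?thesis by simp
qed

lemma sum_prob_anc_card_event:
  assumes n: "n \<le> j"
  shows "(\<Sum>R\<in>gen_subsets X (Suc j) b. prob (anc_card_event n R a))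
    = (\<Sum>T\<in>Pow (gen X j). (\<integral>\<omega>. real (preimage_count j b T \<omega>) \<partial>M) * prob (anc_card_event n T a))"
proof -
  have "(\<Sum>R\<in>gen_subsets X (Suc j) b. prob (anc_card_event n R a))
      = (\<integral>\<omega>. (\<Sum>R\<in>gen_subsets X (Suc j) b. indicator (anc_card_event n R a) \<omega>) \<partial>M)"
    by (subst Bochner_Integration.integral_sum)
      (auto simp: gen_subsets_def less_top[symmetric] intro!: integrable_real_indicator anc_card_event_sets)
  also have "\<dots> = (\<integral>\<omega>. (\<Sum>T\<in>Pow (gen X j). real (preimage_count j b T \<omega>)
      * indicator (anc_card_event n T a) \<omega>) \<partial>M)"
    using sum_indicator_anc_card_event[OF n] by (intro Bochner_Integration.integral_cong) auto
  also have "\<dots> = (\<Sum>T\<in>Pow (gen X j). \<integral>\<omega>. real (preimage_count j b T \<omega>)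
      * indicator (anc_card_event n T a) \<omega> \<partial>M)"
    by (intro Bochner_Integration.integral_sum integrable_real_mult_indicator anc_card_event_sets
        integrable_preimage_count) auto
  also have "\<dots> = (\<Sum>T\<in>Pow (gen X j). (\<integral>\<omega>. real (preimage_count j b T \<omega>) \<partial>M) * prob (anc_card_event n T a))"
    using preimage_count_indep by (intro sum.cong) auto
  finally show ?thesis .
qed

text \<open>Averaged over the b-subsets of generation j + 1, the number of ancestors in generation n
  evolves with the kernel parent_kernel: the offspring vector of generation j is independent of
  the earlier genealogy, and by its exchangeability the expected number of b-subsets with
  parent set T depends on T only through card T.\<close>
lemma avg_anc_card_prob_Suc:
  assumes n: "n \<le> j" and b: "b \<in> {1..X (Suc j)}"
  shows "avg_anc_card_prob n (Suc j) b a
      = (\<Sum>b'\<in>{1..X j}. parent_kernel j b b' * avg_anc_card_prob n j b' a)"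
proof -
  define C where "C = real (X (Suc j) choose b)"
  define F where "F T = (\<integral>\<omega>. real (preimage_count j b T \<omega>) \<partial>M) * prob (anc_card_event n T a)" for T
  have C: "C > 0" unfolding C_def using b by simp
  have "(\<Sum>T\<in>gen_subsets X j 0. F T) = 0"
    using preimage_count_empty b by (simp add: F_def gen_subsets_0 cong: Bochner_Integration.integral_cong)
  moreover have "(\<Sum>T\<in>gen_subsets X j b'. F T) = C * parent_kernel j b b' * avg_anc_card_prob n j b' a"
    if b': "b' \<in> {1..X j}" for b'
  proof -
    have D: "real (card (gen_subsets X j b')) > 0" using b' by (simp add: card_gen_subsets)
    have "(\<Sum>T\<in>gen_subsets X j b'. F T) * real (card (gen_subsets X j b'))
        = (\<Sum>T\<in>gen_subsets X j b'. \<integral>\<omega>. real (preimage_count j b T \<omega>) \<partial>M)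
          * (\<Sum>T\<in>gen_subsets X j b'. prob (anc_card_event n T a))"
      unfolding F_def by (rule sum_mult_const_factor) (auto intro: preimage_count_exchangeable)
    also have "\<dots> = C * parent_kernel j b b' * avg_anc_card_prob n j b' a * real (card (gen_subsets X j b'))"
      using D unfolding sum_expected_preimage_count[OF b] avg_anc_card_prob_def C_def card_gen_subsets
        by simp
    finally show ?thesis using D by (simp add: card_gt_0_iff)
  qed
  moreover have "{0..X j} = insert 0 {1..X j}" by auto
  ultimately have "(\<Sum>b'\<in>{0..X j}. \<Sum>T\<in>gen_subsets X j b'. F T)
      = C * (\<Sum>b'\<in>{1..X j}. parent_kernel j b b' * avg_anc_card_prob n j b' a)"
    by (simp add: sum_distrib_left mult.assoc)
  moreover have "avg_anc_card_prob n (Suc j) b a = (\<Sum>b'\<in>{0..X j}. \<Sum>T\<in>gen_subsets X j b'. F T) / C"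
    using sum_prob_anc_card_event[OF n, where b = b and a = a]
    unfolding avg_anc_card_prob_def C_def sum_Pow_gen_by_card F_def by simp
  ultimately show ?thesis using C by simp
qed

lemma avg_anc_card_prob_base:
  assumes b: "b \<in> {1..X n}"
  shows "avg_anc_card_prob n n b a = (if b = a then 1 else 0)"
proof -
  have "prob (anc_card_event n T a) = (if b = a then 1 else 0)" if T: "T \<in> gen_subsets X n b" for T
  proof -
    have T1: "T \<subseteq> gen X n" "card T = b" using T unfolding gen_subsets_def by auto
    have "anc_card_event n T a = (if b = a then space M else {})"
      unfolding anc_card_event_def using genealogy.ancestors_same_gen[OF realisation_genealogy T1(1)]
        T1(2) by auto
    then show ?thesis by (simp add: prob_space)
  qed
  then have "(\<Sum>T\<in>gen_subsets X n b. prob (anc_card_event n T a)) = real (card (gen_subsets X n b))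
      * (if b = a then 1 else 0)"
    by simp
  then show ?thesis unfolding avg_anc_card_prob_def card_gen_subsets using b by simp
qed

lemma avg_anc_card_prob_eq_kernel_iter:
  "b \<in> {1..X (n + d)} \<Longrightarrow> avg_anc_card_prob n (n + d) b a
      = kernel_iter (\<lambda>d. X (n + d)) (\<lambda>d. parent_kernel (n + d)) d b a"
proof (induction d arbitrary: b)
  case 0
  then show ?case using avg_anc_card_prob_base by simp
next
  case (Suc d)
  have "avg_anc_card_prob n (n + Suc d) b a
      = (\<Sum>b'\<in>{1..X (n + d)}. parent_kernel (n + d) b b' * avg_anc_card_prob n (n + d) b' a)"
    using avg_anc_card_prob_Suc[of n "n + d" b a] Suc.prems by simp
  also have "\<dots> = (\<Sum>b'\<in>{1..X (n + d)}. parent_kernel (n + d) b b'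
      * kernel_iter (\<lambda>d. X (n + d)) (\<lambda>d. parent_kernel (n + d)) d b' a)"
    using Suc.IH by (intro sum.cong refl) simp
  finally show ?case by simp
qed

lemma forward_anc_card_prob:
  assumes "n \<le> m"
  shows "prob (anc_card_event n (gen X m) a) = anc_card_kernel n m a"
proof -
  have "avg_anc_card_prob n (n + (m - n)) (X m) a
      = kernel_iter (\<lambda>d. X (n + d)) (\<lambda>d. parent_kernel (n + d)) (m - n) (X m) a"
    using assms X_pos[of m] by (intro avg_anc_card_prob_eq_kernel_iter) auto
  moreover have "avg_anc_card_prob n m (X m) a = prob (anc_card_event n (gen X m) a)"
    unfolding avg_anc_card_prob_def gen_subsets_full by simp
  ultimately show ?thesis using assms by (simp add: anc_card_kernel_def)
qed

end

section \<open>Backward neutral models\<close>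

locale backward_model = genealogy_model +
  assumes backward: "backward_neutral M X \<E>"
begin

lemma sibpart_exchangeable:
  "\<pi> permutes gen X (Suc n) \<Longrightarrow>
    distr M (count_space UNIV) (\<lambda>\<omega>. (\<lambda>A. \<pi> ` A) ` sibpart X (\<E> \<omega>) n)
    = distr M (count_space UNIV) (\<lambda>\<omega>. sibpart X (\<E> \<omega>) n)"
  using backward unfolding backward_neutral_def by blast

lemma sibpart_indep_after:
  "indep_rv M (count_space UNIV) (\<lambda>\<omega>. sibpart X (\<E> \<omega>) n) edge_space (\<lambda>\<omega>. edges_after X (\<E> \<omega>) n)"
  using backward unfolding backward_neutral_def by blast

lemma parents_card_event_sibpart:
  assumes "S \<subseteq> gen X (Suc j)"
  shows "parents_card_event j S a = (\<lambda>\<omega>. sibpart X (\<E> \<omega>) j) -` {P. card {B \<in> P. B \<inter> S \<noteq> {}} = a} \<inter> space M"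
proof -
  have "card {B \<in> sibpart X (\<E> \<omega>) j. B \<inter> S \<noteq> {}} = card (parents X (\<E> \<omega>) j S)" if "\<omega> \<in> space M" for \<omega>
    using genealogy.card_sibpart_meeting[OF realisation_genealogy[OF that] assms] .
  then show ?thesis unfolding parents_card_event_def by auto
qed

lemma parents_card_event_exchangeable:
  assumes S: "S \<in> gen_subsets X (Suc j) b" "S' \<in> gen_subsets X (Suc j) b"
  shows "prob (parents_card_event j S' a) = prob (parents_card_event j S a)"
proof -
  have Ss: "S \<subseteq> gen X (Suc j)" "S' \<subseteq> gen X (Suc j)" "card S = card S'" using S
    unfolding gen_subsets_def by auto
  obtain \<pi> where \<pi>: "\<pi> permutes gen X (Suc j)" "\<pi> ` S = S'"
    using exists_permutes_image[OF finite_gen Ss] by blast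
  define U where "U = {P :: vertex set set. card {B \<in> P. B \<inter> S' \<noteq> {}} = a}"
  define f where "f \<omega> = sibpart X (\<E> \<omega>) j" for \<omega>
  define f\<pi> where "f\<pi> \<omega> = (\<lambda>A. \<pi> ` A) ` sibpart X (\<E> \<omega>) j" for \<omega>
  have f: "f \<in> M \<rightarrow>\<^sub>M count_space UNIV" unfolding f_def by (rule sibpart_measurable)
  have f\<pi>: "f\<pi> \<in> M \<rightarrow>\<^sub>M count_space UNIV"
    unfolding f\<pi>_def using measurable_compose[OF sibpart_measurable[of j], of "\<lambda>P. (\<lambda>A. \<pi> ` A) ` P"] by simp
  have "parents_card_event j S a = f\<pi> -` U \<inter> space M"
    unfolding parents_card_event_sibpart[OF Ss(1)] f\<pi>_def U_def \<pi>(2)[symmetric]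
    using card_blocks_meeting_image[OF permutes_inj[OF \<pi>(1)]] by auto
  then have "prob (parents_card_event j S a) = measure (distr M (count_space UNIV) f\<pi>) U"
    using measure_distr[OF f\<pi>] by simp
  also have "\<dots> = measure (distr M (count_space UNIV) f) U"
    unfolding f\<pi>_def f_def sibpart_exchangeable[OF \<pi>(1)] ..
  also have "\<dots> = prob (parents_card_event j S' a)"
    using measure_distr[OF f] unfolding parents_card_event_sibpart[OF Ss(2)] f_def U_def by simp
  finally show ?thesis by simp
qed

lemma prob_parents_card_event:
  assumes S: "S \<subseteq> gen X (Suc j)" "S \<noteq> {}"
  shows "prob (parents_card_event j S a) = parent_kernel j (card S) a"
proof -
  have fS: "finite S" using S(1) by (rule finite_subset) simp
  have b: "card S \<in> {1..X (Suc j)}" using S fS card_mono[OF finite_gen S(1)]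
    by (auto simp: Suc_le_eq card_gt_0_iff)
  have Ss: "S \<in> gen_subsets X (Suc j) (card S)" unfolding gen_subsets_def using S by blast
  have "parent_kernel j (card S) a
      = (\<Sum>S'\<in>gen_subsets X (Suc j) (card S). prob (parents_card_event j S a)) /
        real (X (Suc j) choose card S)"
    unfolding parent_kernel_eq_mean_prob using parents_card_event_exchangeable[OF Ss] by simp
  then show ?thesis using b by (simp add: card_gen_subsets)
qed

lemma anc_set_event_indep:
  assumes S: "S \<subseteq> gen X (Suc j)"
  shows "prob (anc_set_event m (Suc j) S \<inter> parents_card_event j S a)
      = prob (anc_set_event m (Suc j) S) * prob (parents_card_event j S a)"
proof -
  have ind: "indep_set {(\<lambda>\<omega>. sibpart X (\<E> \<omega>) j) -` A \<inter> space M | A. A \<in> sets (count_space UNIV)}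
      {(\<lambda>\<omega>. edges_after X (\<E> \<omega>) j) -` A \<inter> space M | A. A \<in> sets edge_space}"
    using sibpart_indep_after unfolding indep_rv_def .
  have "{P. card {B \<in> P. B \<inter> S \<noteq> {}} = a} \<in> sets (count_space UNIV)" by simp
  then have P: "parents_card_event j S a \<in>
      {(\<lambda>\<omega>. sibpart X (\<E> \<omega>) j) -` A \<inter> space M | A. A \<in> sets (count_space UNIV)}"
    unfolding parents_card_event_sibpart[OF S] by blast
  have "{e. ancestors X ({x. e x} \<inter> (\<Union>l\<in>{Suc j..<m}. slots X l)) (Suc j) (gen X m) = S} \<in> sets edge_space"
    by (rule edge_space_sets_restrict) simp
  then have G: "anc_set_event m (Suc j) S \<in>
      {(\<lambda>\<omega>. edges_after X (\<E> \<omega>) j) -` A \<inter> space M | A. A \<in> sets edge_space}"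
    unfolding anc_set_event_edges_after by blast
  show ?thesis using indep_setD[OF ind P G] by (simp add: Int_commute mult.commute)
qed

lemma anc_card_prob_step:
  assumes jm: "j < m"
  shows "prob (anc_card_event j (gen X m) a)
    = (\<Sum>b\<in>{1..X (Suc j)}. prob (anc_card_event (Suc j) (gen X m) b) * parent_kernel j b a)"
proof -
  have m: "Suc j \<le> m" using jm by simp
  define F where "F S = prob (anc_set_event m (Suc j) S) * prob (parents_card_event j S a)" for S
  have "prob (anc_card_event j (gen X m) a)
      = (\<Sum>S\<in>Pow (gen X (Suc j)). prob (anc_set_event m (Suc j) S \<inter> parents_card_event j S a))"
    unfolding anc_card_event_step[OF jm]
    by (rule finite_measure_finite_Union)
      (auto intro!: anc_set_event_disjoint sets.Int anc_set_event_sets[OF m] parents_card_event_sets)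
  also have "\<dots> = (\<Sum>b\<in>{0..X (Suc j)}. \<Sum>S\<in>gen_subsets X (Suc j) b. F S)"
    unfolding sum_Pow_gen_by_card[symmetric] F_def using anc_set_event_indep by (intro sum.cong) auto
  also have "\<dots> = (\<Sum>b\<in>{1..X (Suc j)}. prob (anc_card_event (Suc j) (gen X m) b) * parent_kernel j b a)"
  proof -
    have "anc_set_event m (Suc j) {} = {}"
      unfolding anc_set_event_def using genealogy.ancestors_gen_nonempty[OF realisation_genealogy m
        X_pos] by auto
    then have "(\<Sum>S\<in>gen_subsets X (Suc j) 0. F S) = 0" by (simp add: gen_subsets_0 F_def)
    moreover have "(\<Sum>S\<in>gen_subsets X (Suc j) b. F S) = prob (anc_card_event (Suc j) (gen X m) b)
        * parent_kernel j b a"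
      if b: "b \<in> {1..X (Suc j)}" for b
    proof -
      have "F S = prob (anc_set_event m (Suc j) S) * parent_kernel j b a" if
        "S \<in> gen_subsets X (Suc j) b" for S
      proof -
        have S: "S \<subseteq> gen X (Suc j)" "card S = b" using that unfolding gen_subsets_def by auto
        then have "S \<noteq> {}" using b by auto
        then show ?thesis using prob_parents_card_event[OF S(1)] S(2) unfolding F_def by simp
      qed
      then show ?thesis unfolding prob_anc_card_event_eq_sum[OF m] sum_distrib_right by simp
    qed
    moreover have "{0..X (Suc j)} = insert 0 {1..X (Suc j)}" by auto
    ultimately show ?thesis by simp
  qed
  finally show ?thesis .
qed

lemma anc_card_prob_kernel_iter:
  assumes a: "a \<in> {1..X n}"
  shows "n + d \<le> m \<Longrightarrow> prob (anc_card_event n (gen X m) a) =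
    (\<Sum>b\<in>{1..X (n + d)}. prob (anc_card_event (n + d) (gen X m) b) * kernel_iter (\<lambda>d. X (n + d))
      (\<lambda>d. parent_kernel (n + d)) d b a)"
proof (induction d)
  case 0
  have "(\<Sum>b\<in>{1..X n}. prob (anc_card_event n (gen X m) b) * (if b = a then 1 else 0))
      = (\<Sum>b\<in>{1..X n}. if b = a then prob (anc_card_event n (gen X m) b) else 0)"
    by (intro sum.cong refl) simp
  then show ?case using a by (simp add: sum.delta')
next
  case (Suc d)
  define P where "P l b = prob (anc_card_event l (gen X m) b)" for l b
  define K where "K = kernel_iter (\<lambda>d. X (n + d)) (\<lambda>d. parent_kernel (n + d))"
  have "P n a = (\<Sum>b\<in>{1..X (n + d)}. (\<Sum>b'\<in>{1..X (Suc (n + d))}. P (Suc (n + d)) b'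
      * parent_kernel (n + d) b' b) * K d b a)"
    using Suc anc_card_prob_step[of "n + d" m] unfolding P_def K_def by simp
  also have "\<dots> = (\<Sum>b'\<in>{1..X (Suc (n + d))}. P (Suc (n + d)) b'
      * (\<Sum>b\<in>{1..X (n + d)}. parent_kernel (n + d) b' b * K d b a))"
    unfolding sum_distrib_left sum_distrib_right mult.assoc by (rule sum.swap)
  finally show ?case unfolding P_def K_def by simp
qed

lemma backward_anc_card_prob:
  assumes "n \<le> m" "a \<in> {1..X n}"
  shows "prob (anc_card_event n (gen X m) a) = anc_card_kernel n m a"
proof -
  have P: "prob (anc_card_event m (gen X m) b) * c = (if b = X m then c else 0)" for b c
  proof -
    have "anc_card_event m (gen X m) b = (if b = X m then space M else {})"
      unfolding anc_card_event_def using genealogy.ancestors_same_gen[OF realisation_genealogy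
        subset_refl] by auto
    then show ?thesis by (simp add: prob_space)
  qed
  show ?thesis
    using anc_card_prob_kernel_iter[OF assms(2), of "m - n" m] assms(1) X_pos[of m]
    by (simp add: anc_card_kernel_def P sum.delta')
qed

end

theorem theorem2p4:
  fixes M :: "'w measure" and X :: "nat \<Rightarrow> nat" and k :: "nat \<Rightarrow> nat \<Rightarrow> nat"
    and \<E> :: "'w \<Rightarrow> edge set"
  assumes "prob_space M"
    and "\<And>n. 0 < X n"
    and "\<And>n. (\<Sum>i\<in>{1..X n}. k n i) = X (Suc n)"
    and "\<And>e. {\<omega> \<in> space M. e \<in> \<E> \<omega>} \<in> sets M"
    and "\<And>\<omega>. \<omega> \<in> space M \<Longrightarrow> genealogy_edges X k (\<E> \<omega>)"
    and "forward_neutral M X \<E> \<or> backward_neutral M X \<E>"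
    and "filterlim (t_o X k) at_top sequentially"
  shows "AE \<omega> in M. fixation X (\<E> \<omega>)"
proof -
  have "genealogy_model M X k \<E>"
    unfolding genealogy_model_def genealogy_model_axioms_def using assms(1,2,4,5) by blast
  then interpret genealogy_model M X k \<E> .
  from assms(6) show ?thesis
  proof
    assume f: "forward_neutral M X \<E>"
    interpret forward_model M X k \<E> by unfold_locales (rule f)
    show ?thesis by (rule fixation_AE[OF forward_anc_card_prob assms(7)])
  next
    assume b: "backward_neutral M X \<E>"
    interpret backward_model M X k \<E> by unfold_locales (rule b)
    show ?thesis by (rule fixation_AE[OF backward_anc_card_prob assms(7)])
  qed
qed

end
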